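(* Let $d_1,d_2\ge1$, $p_{i0}<\cdots<p_{id_i}$ reals, $f_i:\{p_{i0},\dots,p_{id_i}\}\to\mathbb{R}$ ($i=1,2$). Let $\sigma,\tau$, $\psi^\sigma,\psi^\tau$, $N=d_1+d_2$ be as follows: $\sigma_i$ a permutation of $\{0,\dots,d_i\}$ with $f_i(p_{i,\sigma_i(0)})\le\cdots\le f_i(p_{i,\sigma_i(d_i)})$ ($i=1,2$); $\tau_1,\tau_2$ permutations with $f_1(p_{1,\tau_1(0)})\le\cdots\le f_1(p_{1,\tau_1(d_1)})$ and $f_2(p_{2,\tau_2(0)})\ge\cdots\ge f_2(p_{2,\tau_2(d_2)})$; $\psi^\sigma(\boldsymbol{j})=f_1(p_{1,\sigma_1(j_1)})f_2(p_{2,\sigma_2(j_2)})$, $\psi^\tau(\boldsymbol{j})=f_1(p_{1,\tau_1(j_1)})f_2(p_{2,\tau_2(j_2)})$. For $i=1,2$ let $\boldsymbol{\eta}^0_i,\dots,\boldsymbol{\eta}^{d_i}_i$ be distinct vectors in $\{0,1\}^{K_i}$, $K_i=\lceil\log_2(d_i+1)\rceil$, and $A_{ik}=\{t\in\{0,\dots,d_i\}:\eta^t_{ik}=1\}$. Then the set of $(\boldsymbol{x},\boldsymbol{z},\mu,\boldsymbol{\delta})$ satisfying, for $i=1,2$: $\boldsymbol{z}_i\in\Delta^{d_i}$, $\boldsymbol{\delta}_i\in\{0,1\}^{K_i}$, $\sum_{j\in A_{ik}}(z_{ij}-z_{i,j+1})\le\delta_{ik}$ and $\sum_{j\in\{0,\dots,d_i\}\setminus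 A_{ik}}(z_{ij}-z_{i,j+1})\le1-\delta_{ik}$ for $k=1,\dots,K_i$ (with $z_{i0}=1$, $z_{i,d_i+1}=0$), $(x_i,\boldsymbol{z}_i)\in B_i$; together with $\boldsymbol{z}'=(L^\sigma)^{-1}(\boldsymbol{z})$, $\boldsymbol{z}''=(L^\tau)^{-1}(\boldsymbol{z})$ and, for all $\pi\in\Pi$, $$\mu\le\psi^\sigma(\boldsymbol{j}^0)+\sum_{t\in[N]}(\psi^\sigma(\boldsymbol{j}^t)-\psi^\sigma(\boldsymbol{j}^{t-1}))z'_{\pi_t},\qquad\mu\ge\psi^\tau(\boldsymbol{j}^0)+\sum_{t\in[N]}(\psi^\tau(\boldsymbol{j}^t)-\psi^\tau(\boldsymbol{j}^{t-1}))z''_{\pi_t},$$ is an ideal MIP formulation (with binary variables $\boldsymbol{\delta}$ only) of $\{(\boldsymbol{x},\mu):\mu=f_1(x_1)f_2(x_2),\ x_i\in\{p_{i0},\dots,p_{id_i}\},\ i=1,2\}$.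
   Context: $\Delta^d=\{\boldsymbol{z}\in\mathbb{R}^d:1\ge z_1\ge\cdots\ge z_d\ge0\}$; $\boldsymbol{z}=(\boldsymbol{z}_1,\boldsymbol{z}_2)$. $B_i=\{(x_i,\boldsymbol{z}_i):x_i=p_{i0}+\sum_{j\in[d_i]}(p_{ij}-p_{i,j-1})z_{ij},\ \boldsymbol{z}_i\in\Delta^{d_i}\}$. Staircases: $\pi=(\pi_1,\dots,\pi_N)$, $\pi_t=(\pi_t(1),\pi_t(2))$, $\pi_t(1)\in\{1,2\}$ with $i$ occurring exactly $d_i$ times, $\pi_t(2)=|\{s\le t:\pi_s(1)=\pi_t(1)\}|$; $\Pi$ = set of staircases; $z_{\pi_t}=z_{\pi_t(1),\pi_t(2)}$; $\boldsymbol{j}^0=(0,0)$, $\boldsymbol{j}^t=\boldsymbol{j}^{t-1}+\boldsymbol{e}_{\pi_t(1)}$. For permutations $\rho_i$ of $\{0,\dots,d_i\}$: $T_i(\boldsymbol{z}_i)=\boldsymbol{\lambda}_i$ with $\lambda_{ij}=z_{ij}-z_{i,j+1}$, $j=0,\dots,d_i$ ($z_{i0}=1,z_{i,d_i+1}=0$), $T_i^{-1}:z_{ij}=\sum_{k\ge j}\lambda_{ik}$; $P^{\rho_i}$ permutation matrix with $(j,k)$ entry $1$ iff $j=\rho_i(k)$; $L^{\rho_i}=T_i^{-1}\circ P^{\rho_i}\circ T_i$, $L^\rho=(L^{\rho_1},L^{\rho_2})$. An MIP formulation of $S$: polyhedron plus binary restrictions whose projection on original variables is $S$; ideal: every vertex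 of the LP relaxation has the binary-restricted variables binary. *)

theory Defs
  imports "HOL-Analysis.Analysis"
begin

text \<open>Vectors z_i in R^{d_i} are functions nat => real indexed by 1..d_i.
  ext d z adds the conventions z_0 = 1 and z_{d+1} = 0.\<close>
definition ext :: "nat \<Rightarrow> (nat \<Rightarrow> real) \<Rightarrow> nat \<Rightarrow> real" where
  "ext d z j = (if j = 0 then 1 else if j \<le> d then z j else 0)"

definition Delta :: "nat \<Rightarrow> (nat \<Rightarrow> real) set" where
  "Delta d = {z. \<forall>j\<in>{0..d}. ext d z (Suc j) \<le> ext d z j}"

definition inB :: "(nat \<Rightarrow> real) \<Rightarrow> nat \<Rightarrow> real \<Rightarrow> (nat \<Rightarrow> real) \<Rightarrow> bool" where
  "inB p d x z \<longleftrightarrow> z \<in> Delta d \<and> x = p 0 + (\<Sum>j\<in>{1..d}. (p j - p (j - 1)) * z j)"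

definition Tmap :: "nat \<Rightarrow> (nat \<Rightarrow> real) \<Rightarrow> nat \<Rightarrow> real" where
  "Tmap d z = (\<lambda>j. ext d z j - ext d z (Suc j))"

definition Tinv :: "nat \<Rightarrow> (nat \<Rightarrow> real) \<Rightarrow> nat \<Rightarrow> real" where
  "Tinv d lam = (\<lambda>j. \<Sum>k\<in>{j..d}. lam k)"

definition Pperm :: "nat \<Rightarrow> (nat \<Rightarrow> nat) \<Rightarrow> (nat \<Rightarrow> real) \<Rightarrow> nat \<Rightarrow> real" where
  "Pperm d \<rho> lam = (\<lambda>j. \<Sum>k\<in>{0..d}. (if j = \<rho> k then 1 else 0) * lam k)"

definition Lmap :: "nat \<Rightarrow> (nat \<Rightarrow> nat) \<Rightarrow> (nat \<Rightarrow> real) \<Rightarrow> nat \<Rightarrow> real" where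
  "Lmap d \<rho> = Tinv d \<circ> Pperm d \<rho> \<circ> Tmap d"

text \<open>(L^rho)^{-1} = T^{-1} o (P^rho)^{-1} o T, and (P^rho)^{-1} = P^{rho^{-1}}.\<close>
definition Linv :: "nat \<Rightarrow> (nat \<Rightarrow> nat) \<Rightarrow> (nat \<Rightarrow> real) \<Rightarrow> nat \<Rightarrow> real" where
  "Linv d \<rho> = Tinv d \<circ> Pperm d (inv_into {0..d} \<rho>) \<circ> Tmap d"

text \<open>Staircases: lists pi of length N = d1 + d2 of pairs (pi_t(1), pi_t(2));
  list position t (0-based) corresponds to pi_{t+1}.\<close>
definition staircases :: "nat \<Rightarrow> nat \<Rightarrow> (nat \<times> nat) list set" where
  "staircases d1 d2 = {\<pi>. length \<pi> = d1 + d2 \<and>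
     (\<forall>t<length \<pi>. fst (\<pi> ! t) \<in> {1, 2}) \<and>
     card {t. t < length \<pi> \<and> fst (\<pi> ! t) = 1} = d1 \<and>
     card {t. t < length \<pi> \<and> fst (\<pi> ! t) = 2} = d2 \<and>
     (\<forall>t<length \<pi>. snd (\<pi> ! t) = card {s. s \<le> t \<and> fst (\<pi> ! s) = fst (\<pi> ! t)})}"

definition unitv :: "nat \<Rightarrow> nat \<times> nat" where
  "unitv i = (if i = 1 then (1, 0) else (0, 1))"

fun jvec :: "(nat \<times> nat) list \<Rightarrow> nat \<Rightarrow> nat \<times> nat" where
  "jvec \<pi> 0 = (0, 0)"
| "jvec \<pi> (Suc t) = (fst (jvec \<pi> t) + fst (unitv (fst (\<pi> ! t))),
                      snd (jvec \<pi> t) + snd (unitv (fst (\<pi> ! t))))"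

definition psi :: "(real \<Rightarrow> real) \<Rightarrow> (real \<Rightarrow> real) \<Rightarrow> (nat \<Rightarrow> real) \<Rightarrow> (nat \<Rightarrow> real)
    \<Rightarrow> (nat \<Rightarrow> nat) \<Rightarrow> (nat \<Rightarrow> nat) \<Rightarrow> nat \<times> nat \<Rightarrow> real" where
  "psi f1 f2 p1 p2 s1 s2 j = f1 (p1 (s1 (fst j))) * f2 (p2 (s2 (snd j)))"

definition stair_expr :: "(nat \<times> nat \<Rightarrow> real) \<Rightarrow> (nat \<times> nat) list
    \<Rightarrow> (nat \<Rightarrow> real) \<Rightarrow> (nat \<Rightarrow> real) \<Rightarrow> real" where
  "stair_expr \<psi> \<pi> z1 z2 = \<psi> (jvec \<pi> 0) +
     (\<Sum>t\<in>{1..length \<pi>}. (\<psi> (jvec \<pi> t) - \<psi> (jvec \<pi> (t - 1))) *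
        (if fst (\<pi> ! (t - 1)) = 1 then z1 else z2) (snd (\<pi> ! (t - 1))))"

definition Kdim :: "nat \<Rightarrow> nat" where
  "Kdim d = nat \<lceil>log 2 (real d + 1)\<rceil>"

definition Aset :: "(nat \<Rightarrow> nat \<Rightarrow> bool) \<Rightarrow> nat \<Rightarrow> nat \<Rightarrow> nat set" where
  "Aset \<eta> d k = {t\<in>{0..d}. \<eta> t k}"

text \<open>Points (x1, x2, z1, z2, mu, delta1, delta2) of the extended space;
  z_i indexed by 1..d_i and delta_i by 1..K_i, other coordinates fixed to 0.\<close>
type_synonym pt = "real \<times> real \<times> (nat \<Rightarrow> real) \<times> (nat \<Rightarrow> real) \<times> real \<times> (nat \<Rightarrow> real) \<times> (nat \<Rightarrow> real)"

definition block_ok :: "nat \<Rightarrow> (nat \<Rightarrow> real) \<Rightarrow> (nat \<Rightarrow> nat \<Rightarrow> bool) \<Rightarrow> real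
    \<Rightarrow> (nat \<Rightarrow> real) \<Rightarrow> (nat \<Rightarrow> real) \<Rightarrow> bool" where
  "block_ok d p \<eta> x z \<delta> \<longleftrightarrow>
     (\<forall>j. j \<notin> {1..d} \<longrightarrow> z j = 0) \<and> (\<forall>k. k \<notin> {1..Kdim d} \<longrightarrow> \<delta> k = 0) \<and>
     z \<in> Delta d \<and>
     (\<forall>k\<in>{1..Kdim d}. 0 \<le> \<delta> k \<and> \<delta> k \<le> 1 \<and>
        (\<Sum>j\<in>Aset \<eta> d k. Tmap d z j) \<le> \<delta> k \<and>
        (\<Sum>j\<in>{0..d} - Aset \<eta> d k. Tmap d z j) \<le> 1 - \<delta> k) \<and>
     inB p d x z"

definition relaxation ::
  "nat \<Rightarrow> nat \<Rightarrow> (nat \<Rightarrow> real) \<Rightarrow> (nat \<Rightarrow> real) \<Rightarrow> (real \<Rightarrow> real) \<Rightarrow> (real \<Rightarrow> real)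
   \<Rightarrow> (nat \<Rightarrow> nat) \<Rightarrow> (nat \<Rightarrow> nat) \<Rightarrow> (nat \<Rightarrow> nat) \<Rightarrow> (nat \<Rightarrow> nat)
   \<Rightarrow> (nat \<Rightarrow> nat \<Rightarrow> bool) \<Rightarrow> (nat \<Rightarrow> nat \<Rightarrow> bool) \<Rightarrow> pt set" where
  "relaxation d1 d2 p1 p2 f1 f2 \<sigma>1 \<sigma>2 \<tau>1 \<tau>2 \<eta>1 \<eta>2 =
    {(x1, x2, z1, z2, \<mu>, \<delta>1, \<delta>2).
       block_ok d1 p1 \<eta>1 x1 z1 \<delta>1 \<and> block_ok d2 p2 \<eta>2 x2 z2 \<delta>2 \<and>
       (\<forall>\<pi>\<in>staircases d1 d2.
          \<mu> \<le> stair_expr (psi f1 f2 p1 p2 \<sigma>1 \<sigma>2) \<pi> (Linv d1 \<sigma>1 z1) (Linv d2 \<sigma>2 z2) \<and>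
          \<mu> \<ge> stair_expr (psi f1 f2 p1 p2 \<tau>1 \<tau>2) \<pi> (Linv d1 \<tau>1 z1) (Linv d2 \<tau>2 z2))}"

definition binary_ok :: "nat \<Rightarrow> nat \<Rightarrow> pt \<Rightarrow> bool" where
  "binary_ok d1 d2 w = (case w of (x1, x2, z1, z2, \<mu>, \<delta>1, \<delta>2) \<Rightarrow>
     (\<forall>k\<in>{1..Kdim d1}. \<delta>1 k \<in> {0, 1}) \<and> (\<forall>k\<in>{1..Kdim d2}. \<delta>2 k \<in> {0, 1}))"

definition proj_xmu :: "pt \<Rightarrow> real \<times> real \<times> real" where
  "proj_xmu w = (case w of (x1, x2, z1, z2, \<mu>, \<delta>1, \<delta>2) \<Rightarrow> (x1, x2, \<mu>))"

definition fcomb :: "real \<Rightarrow> (nat \<Rightarrow> real) \<Rightarrow> (nat \<Rightarrow> real) \<Rightarrow> nat \<Rightarrow> real" where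
  "fcomb u a b = (\<lambda>k. (1 - u) * a k + u * b k)"

definition pcomb :: "real \<Rightarrow> pt \<Rightarrow> pt \<Rightarrow> pt" where
  "pcomb u a b = (case a of (x1, x2, z1, z2, \<mu>, \<delta>1, \<delta>2) \<Rightarrow>
                  case b of (x1', x2', z1', z2', \<mu>', \<delta>1', \<delta>2') \<Rightarrow>
     ((1 - u) * x1 + u * x1', (1 - u) * x2 + u * x2', fcomb u z1 z1', fcomb u z2 z2',
      (1 - u) * \<mu> + u * \<mu>', fcomb u \<delta>1 \<delta>1', fcomb u \<delta>2 \<delta>2'))"

definition vertex_of :: "pt \<Rightarrow> pt set \<Rightarrow> bool" where
  "vertex_of v Q \<longleftrightarrow> v \<in> Q \<and>
     \<not> (\<exists>a\<in>Q. \<exists>b\<in>Q. a \<noteq> b \<and> (\<exists>u. 0 < u \<and> u < 1 \<and> v = pcomb u a b))"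

definition ideal_MIP_formulation ::
  "pt set \<Rightarrow> (pt \<Rightarrow> bool) \<Rightarrow> (pt \<Rightarrow> 'b) \<Rightarrow> 'b set \<Rightarrow> bool" where
  "ideal_MIP_formulation Q bin proj S \<longleftrightarrow>
     proj ` {w \<in> Q. bin w} = S \<and> (\<forall>v. vertex_of v Q \<longrightarrow> bin v)"

end

theory Submission
  imports Defs "HOL-Library.Function_Algebras"
begin

text \<open>The relaxation is the convex hull of the points at which each block sits at a vertex
  of its simplex and \<open>\<mu> = f\<^sub>1(x\<^sub>1) f\<^sub>2(x\<^sub>2)\<close>; these points are binary, so the formulation is
  ideal.

  Every point of \<open>\<Delta>\<^sup>d\<^sup>1 \<times> \<Delta>\<^sup>d\<^sup>2\<close> lies in a simplex of the staircase triangulation, found by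
  merging the coordinates in decreasing order, and on that staircase the staircase expression
  of \<open>\<psi>\<close> is the matching convex combination of the values \<open>\<psi>(j\<^sup>t)\<close>. After the change of
  coordinates \<open>(L\<^sup>\<rho>)\<^sup>-\<^sup>1\<close>, the \<open>\<sigma>\<close>- and \<open>\<tau>\<close>-constraints thus produce two points of the hull
  that bracket \<open>\<mu>\<close>. Conversely the vertex points satisfy all constraints because \<open>\<psi>\<^sup>\<sigma>\<close> and
  \<open>-\<psi>\<^sup>\<tau>\<close> are supermodular. Finally, at a binary point distinct codes force each block to a
  vertex, where the two families of constraints pin \<open>\<mu>\<close> to \<open>f\<^sub>1(x\<^sub>1) f\<^sub>2(x\<^sub>2)\<close>.\<close>

section \<open>Pointwise vector structure\<close>

instantiation "fun" :: (type, real_vector) real_vector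
begin

definition scaleR_fun :: "real \<Rightarrow> ('a \<Rightarrow> 'b) \<Rightarrow> 'a \<Rightarrow> 'b" where
  "scaleR_fun r f = (\<lambda>x. r *\<^sub>R f x)"

instance
  by standard (simp_all add: scaleR_fun_def fun_eq_iff scaleR_add_right scaleR_add_left)

end

lemma scaleR_fun_apply [simp]: "(r *\<^sub>R f) x = r *\<^sub>R f x"
  by (simp add: scaleR_fun_def)

lemma sum_fun_apply: "(\<Sum>i\<in>I. f i) x = (\<Sum>i\<in>I. f i x)"
  by (induction I rule: infinite_finite_induct) auto

lemma fcomb_eq_scaleR: "fcomb u a b = (1 - u) *\<^sub>R a + u *\<^sub>R b"
  by (simp add: fcomb_def fun_eq_iff)

lemma pcomb_eq_scaleR: "pcomb u a b = (1 - u) *\<^sub>R a + u *\<^sub>R b"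
  by (simp add: pcomb_def fcomb_eq_scaleR split: prod.splits)

lemma vertex_of_imp_extreme_point: "vertex_of v Q \<Longrightarrow> v extreme_point_of Q"
  unfolding vertex_of_def extreme_point_of_def in_segment(2) pcomb_eq_scaleR by blast

section \<open>Simplex coordinates\<close>

lemma sum_diff_mult_by_parts:
  fixes u g :: "nat \<Rightarrow> real"
  shows "(\<Sum>t\<le>n. (u t - u (Suc t)) * g t)
    = u 0 * g 0 + (\<Sum>t=1..n. u t * (g t - g (t - 1))) - u (Suc n) * g n"
  by (induction n) (simp_all add: algebra_simps)

lemma ext_0 [simp]: "ext d z 0 = 1"
  and ext_Suc_self [simp]: "ext d z (Suc d) = 0"
  by (simp_all add: ext_def)

lemma ext_eq_sum_Tmap: "j \<le> Suc d \<Longrightarrow> ext d z j = (\<Sum>k=j..d. Tmap d z k)"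
  using sum_Suc_diff[of j d "\<lambda>k. - ext d z k"] by (simp add: Tmap_def)

lemma sum_Tmap: "(\<Sum>k=0..d. Tmap d z k) = 1"
  using ext_eq_sum_Tmap[of 0 d z] by simp

lemma Tmap_eqI:
  assumes "\<And>j. j \<le> Suc d \<Longrightarrow> ext d z j = (\<Sum>k=j..d. c k)" and "k \<le> d"
  shows "Tmap d z k = c k"
  using assms by (simp add: Tmap_def sum.atLeast_Suc_atMost)

lemma Delta_iff_Tmap_nonneg: "z \<in> Delta d \<longleftrightarrow> (\<forall>k\<le>d. 0 \<le> Tmap d z k)"
  by (auto simp: Delta_def Tmap_def)

lemma Delta_antimono:
  assumes "z \<in> Delta d" "i \<le> j" "j \<le> Suc d"
  shows "ext d z j \<le> ext d z i"
proof (rule lift_Suc_antimono_le_ivl[where N = "{0..d}"])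
  show "ext d z (Suc n) \<le> ext d z n" if "n \<in> {0..d}" for n
    using assms(1) that by (simp add: Delta_def)
qed (use assms in auto)

lemma ext_affine_comb: "ext d ((1 - u) *\<^sub>R z + u *\<^sub>R z') j = (1 - u) * ext d z j + u * ext d z' j"
  by (simp add: ext_def)

lemma Tmap_affine_comb: "Tmap d ((1 - u) *\<^sub>R z + u *\<^sub>R z') k = (1 - u) * Tmap d z k + u * Tmap d z' k"
  unfolding Tmap_def ext_affine_comb by (simp add: algebra_simps)

lemma convex_Delta: "convex (Delta d)"
  unfolding convex_alt
  by (auto simp: Delta_iff_Tmap_nonneg Tmap_affine_comb intro!: add_nonneg_nonneg mult_nonneg_nonneg)

lemma Linv_affine_comb:
  "Linv d \<rho> ((1 - u) *\<^sub>R z + u *\<^sub>R z') = (1 - u) *\<^sub>R Linv d \<rho> z + u *\<^sub>R Linv d \<rho> z'"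
  unfolding Linv_def Tinv_def Pperm_def comp_def fun_eq_iff Tmap_affine_comb
  by (simp add: distrib_left mult.left_commute sum.distrib sum_distrib_left)

lemma Linv_eq_sum:
  assumes "bij_betw \<rho> {0..d} {0..d}"
  shows "Linv d \<rho> z j = (\<Sum>k=j..d. Tmap d z (\<rho> k))"
proof -
  have "Pperm d (inv_into {0..d} \<rho>) c k = c (\<rho> k)" if "k \<le> d" for c k
  proof -
    have "(k = inv_into {0..d} \<rho> m) \<longleftrightarrow> (m = \<rho> k)" if "m \<le> d" for m
      using assms \<open>k \<le> d\<close> that by (auto simp: bij_betw_inv_into_left bij_betw_inv_into_right)
    then have "Pperm d (inv_into {0..d} \<rho>) c k = (\<Sum>m=0..d. if m = \<rho> k then c m else 0)"
      unfolding Pperm_def by (intro sum.cong) auto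
    also have "\<dots> = c (\<rho> k)"
      using assms \<open>k \<le> d\<close> by (auto simp: bij_betw_def)
    finally show ?thesis .
  qed
  then show ?thesis
    by (simp add: Linv_def Tinv_def)
qed

lemma Tmap_Linv:
  assumes "bij_betw \<rho> {0..d} {0..d}" "k \<le> d"
  shows "Tmap d (Linv d \<rho> z) k = Tmap d z (\<rho> k)"
proof (rule Tmap_eqI[OF _ assms(2)])
  fix j assume "j \<le> Suc d"
  then consider "j = 0" | "j \<in> {1..d}" | "j = Suc d"
    by fastforce
  then show "ext d (Linv d \<rho> z) j = (\<Sum>k=j..d. Tmap d z (\<rho> k))"
  proof cases
    case 1
    then show ?thesis
      using sum.reindex_bij_betw[OF assms(1), of "Tmap d z"] by (simp add: sum_Tmap)
  qed (auto simp: ext_def Linv_eq_sum[OF assms(1)])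
qed

lemma Linv_in_Delta:
  assumes "bij_betw \<rho> {0..d} {0..d}" "z \<in> Delta d"
  shows "Linv d \<rho> z \<in> Delta d"
  using assms bij_betw_apply[OF assms(1)] by (simp add: Delta_iff_Tmap_nonneg Tmap_Linv)

definition simplex_vertex :: "nat \<Rightarrow> nat \<Rightarrow> real" where
  "simplex_vertex t j = of_bool (1 \<le> j \<and> j \<le> t)"

lemma Tmap_simplex_vertex: "t \<le> d \<Longrightarrow> Tmap d (simplex_vertex t) k = of_bool (k = t)"
  by (auto simp: Tmap_def ext_def simplex_vertex_def)

lemma simplex_vertex_in_Delta: "t \<le> d \<Longrightarrow> simplex_vertex t \<in> Delta d"
  by (simp add: Delta_iff_Tmap_nonneg Tmap_simplex_vertex)

lemma Linv_simplex_vertex: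
  assumes "bij_betw \<rho> {0..d} {0..d}" "t \<le> d"
  shows "Linv d \<rho> (simplex_vertex t) j = of_bool (j \<le> inv_into {0..d} \<rho> t)"
proof -
  let ?s = "inv_into {0..d} \<rho> t"
  have "(\<rho> k = t) \<longleftrightarrow> (k = ?s)" if "k \<le> d" for k
    using assms that by (auto simp: bij_betw_inv_into_left bij_betw_inv_into_right)
  then have "Linv d \<rho> (simplex_vertex t) j = (\<Sum>k=j..d. if k = ?s then 1 else 0)"
    unfolding Linv_eq_sum[OF assms(1)] using assms(2)
    by (intro sum.cong) (auto simp: Tmap_simplex_vertex)
  moreover have "?s \<le> d"
    using bij_betw_apply[OF bij_betw_inv_into[OF assms(1)]] assms(2) by simp
  ultimately show ?thesis
    by (simp add: sum.delta)
qed

lemma Tmap_threshold_comb: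
  assumes "finite I" "sum w I = 1" "\<forall>i\<in>I. g i \<le> d"
    and a: "\<forall>j\<in>{1..d}. a j = (\<Sum>i\<in>I. w i * of_bool (j \<le> g i))" and "k \<le> d"
  shows "Tmap d a k = (\<Sum>i\<in>I. w i * of_bool (g i = k))"
proof (rule Tmap_eqI[OF _ \<open>k \<le> d\<close>])
  fix j assume "j \<le> Suc d"
  have "(\<Sum>k=j..d. \<Sum>i\<in>I. w i * of_bool (g i = k)) = (\<Sum>i\<in>I. \<Sum>k=j..d. w i * of_bool (g i = k))"
    by (rule sum.swap)
  also have "\<dots> = (\<Sum>i\<in>I. w i * of_bool (j \<le> g i))"
    using assms(3) by (intro sum.cong) (auto simp: Int_insert_right)
  also have "\<dots> = ext d a j"
    using \<open>j \<le> Suc d\<close> assms(1-3) a by (cases "j = 0 \<or> j = Suc d") (auto simp: ext_def intro!: sum.neutral)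
  finally show "ext d a j = (\<Sum>k=j..d. \<Sum>i\<in>I. w i * of_bool (g i = k))"
    by simp
qed

lemma Tmap_Linv_threshold_comb:
  assumes \<rho>: "bij_betw \<rho> {0..d} {0..d}" and "finite I" "sum w I = 1" and g: "\<forall>i\<in>I. g i \<le> d"
    and "\<forall>j\<in>{1..d}. Linv d \<rho> z j = (\<Sum>i\<in>I. w i * of_bool (j \<le> g i))" and "k \<le> d"
  shows "Tmap d z k = (\<Sum>i\<in>I. w i * of_bool (\<rho> (g i) = k))"
proof -
  obtain k' where k': "k' \<le> d" "k = \<rho> k'"
    using bij_betw_imp_surj_on[OF \<rho>] \<open>k \<le> d\<close> by (metis atLeastAtMost_iff image_iff zero_le)
  have "(\<rho> (g i) = \<rho> k') \<longleftrightarrow> (g i = k')" if "i \<in> I" for i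
    using \<rho> g that k'(1) by (auto simp: bij_betw_def inj_on_def)
  then have "(\<Sum>i\<in>I. w i * of_bool (\<rho> (g i) = k)) = (\<Sum>i\<in>I. w i * of_bool (g i = k'))"
    using k'(2) by (intro sum.cong) auto
  also have "\<dots> = Tmap d (Linv d \<rho> z) k'"
    using Tmap_threshold_comb[of I w g d "Linv d \<rho> z" k'] assms k'(1) by simp
  also have "\<dots> = Tmap d z k"
    using Tmap_Linv[OF \<rho> k'(1)] k'(2) by simp
  finally show ?thesis ..
qed

lemma affine_sum_eq_sum_Tmap:
  "p 0 + (\<Sum>j=1..d. (p j - p (j - 1)) * z j) = (\<Sum>k\<le>d. Tmap d z k * p k)"
proof -
  have "(\<Sum>j=1..d. (p j - p (j - 1)) * z j) = (\<Sum>j=1..d. ext d z j * (p j - p (j - 1)))"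
    by (intro sum.cong) (auto simp: ext_def)
  then show ?thesis
    using sum_diff_mult_by_parts[of "ext d z" p d] by (simp add: Tmap_def)
qed

section \<open>Blocks\<close>

lemma block_ok_Tmap_nonneg: "block_ok d p \<eta> x z \<delta> \<Longrightarrow> k \<le> d \<Longrightarrow> 0 \<le> Tmap d z k"
  by (simp add: block_ok_def Delta_iff_Tmap_nonneg)

lemma block_ok_x_eq: "block_ok d p \<eta> x z \<delta> \<Longrightarrow> x = (\<Sum>k\<le>d. Tmap d z k * p k)"
  using affine_sum_eq_sum_Tmap[where p = p and d = d and z = z] by (simp add: block_ok_def inB_def)

text \<open>The two code inequalities of block \<open>k\<close> add up to \<open>1 \<le> 1\<close>, so both are tight.\<close>
lemma block_ok_delta_eq:
  assumes "block_ok d p \<eta> x z \<delta>" "k \<in> {1..Kdim d}"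
  shows "\<delta> k = (\<Sum>j\<in>Aset \<eta> d k. Tmap d z j)"
proof -
  have "Aset \<eta> d k \<subseteq> {0..d}"
    by (auto simp: Aset_def)
  then have "(\<Sum>j\<in>Aset \<eta> d k. Tmap d z j) + (\<Sum>j\<in>{0..d} - Aset \<eta> d k. Tmap d z j) = 1"
    using sum.subset_diff[of "Aset \<eta> d k" "{0..d}" "Tmap d z"] sum_Tmap[of d z] by simp
  with assms show ?thesis
    unfolding block_ok_def by force
qed

lemma sum_Aset_eq:
  fixes c :: "nat \<Rightarrow> real"
  shows "(\<Sum>j\<in>Aset \<eta> d k. c j) = (\<Sum>j\<le>d. c j * of_bool (\<eta> j k))"
  by (rule sum.mono_neutral_cong_left) (auto simp: Aset_def)

definition code_vector :: "(nat \<Rightarrow> nat \<Rightarrow> bool) \<Rightarrow> nat \<Rightarrow> nat \<Rightarrow> nat \<Rightarrow> real" where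
  "code_vector \<eta> d t k = of_bool (k \<in> {1..Kdim d} \<and> \<eta> t k)"

lemma block_ok_vertex:
  assumes "t \<le> d"
  shows "block_ok d p \<eta> (p t) (simplex_vertex t) (code_vector \<eta> d t)"
proof -
  have sum_vertex: "(\<Sum>j\<in>S. Tmap d (simplex_vertex t) j) = of_bool (t \<in> S)" if "S \<subseteq> {0..d}" for S
  proof -
    have "finite S"
      using that finite_subset by blast
    then show ?thesis
      using assms by (simp add: Tmap_simplex_vertex Int_insert_right)
  qed
  have "p 0 + (\<Sum>j=1..d. (p j - p (j - 1)) * simplex_vertex t j) = p t"
    unfolding affine_sum_eq_sum_Tmap using assms by (simp add: Tmap_simplex_vertex Int_insert_right)
  then have "inB p d (p t) (simplex_vertex t)"
    using assms by (simp add: inB_def simplex_vertex_in_Delta)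
  moreover have "Aset \<eta> d k \<subseteq> {0..d}" "t \<in> Aset \<eta> d k \<longleftrightarrow> \<eta> t k" for k
    using assms by (auto simp: Aset_def)
  ultimately show ?thesis
    using assms unfolding block_ok_def
    by (auto simp: sum_vertex simplex_vertex_def code_vector_def simplex_vertex_in_Delta)
qed

lemma sum_Tmap_mult_comb:
  assumes "\<forall>i\<in>I. s i \<le> d" and lam: "\<forall>k\<le>d. Tmap d z k = (\<Sum>i\<in>I. w i * of_bool (s i = k))"
  shows "(\<Sum>k\<le>d. Tmap d z k * g k) = (\<Sum>i\<in>I. w i * g (s i))"
proof -
  have "(\<Sum>k\<le>d. Tmap d z k * g k) = (\<Sum>k\<le>d. \<Sum>i\<in>I. w i * of_bool (s i = k) * g k)"
    by (simp add: lam sum_distrib_right)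
  also have "\<dots> = (\<Sum>i\<in>I. \<Sum>k\<le>d. if k = s i then w i * g k else 0)"
    by (subst sum.swap) (auto intro!: sum.cong)
  also have "\<dots> = (\<Sum>i\<in>I. w i * g (s i))"
    using assms(1) by (intro sum.cong) auto
  finally show ?thesis .
qed

lemma block_ok_eq_comb:
  assumes B: "block_ok d p \<eta> x z \<delta>" and "finite I" "sum w I = 1" "\<forall>i\<in>I. s i \<le> d"
    and lam: "\<forall>k\<le>d. Tmap d z k = (\<Sum>i\<in>I. w i * of_bool (s i = k))"
  shows "x = (\<Sum>i\<in>I. w i * p (s i))"
    and "z = (\<Sum>i\<in>I. w i *\<^sub>R simplex_vertex (s i))"
    and "\<delta> = (\<Sum>i\<in>I. w i *\<^sub>R code_vector \<eta> d (s i))"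
proof -
  note comb = sum_Tmap_mult_comb[OF assms(4) lam]
  show "x = (\<Sum>i\<in>I. w i * p (s i))"
    using block_ok_x_eq[OF B] comb[of p] by simp
  have "z j = (\<Sum>i\<in>I. w i * simplex_vertex (s i) j)" for j
  proof (cases "j \<in> {1..d}")
    case True
    moreover have "{..d} \<inter> {k. j \<le> k} = {j..d}"
      by auto
    ultimately have "z j = (\<Sum>k\<le>d. Tmap d z k * of_bool (j \<le> k))"
      using ext_eq_sum_Tmap[of j d z] by (simp add: ext_def)
    then show ?thesis
      using True comb by (simp add: simplex_vertex_def)
  next
    case False
    then show ?thesis
      using B assms(4) by (auto simp: block_ok_def simplex_vertex_def intro!: sum.neutral)
  qed
  then show "z = (\<Sum>i\<in>I. w i *\<^sub>R simplex_vertex (s i))"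
    by (simp add: fun_eq_iff sum_fun_apply)
  have "\<delta> k = (\<Sum>i\<in>I. w i * code_vector \<eta> d (s i) k)" for k
  proof (cases "k \<in> {1..Kdim d}")
    case True
    then show ?thesis
      using block_ok_delta_eq[OF B True] comb by (simp add: sum_Aset_eq code_vector_def)
  next
    case False
    then show ?thesis
      using B by (auto simp: block_ok_def code_vector_def)
  qed
  then show "\<delta> = (\<Sum>i\<in>I. w i *\<^sub>R code_vector \<eta> d (s i))"
    by (simp add: fun_eq_iff sum_fun_apply)
qed

lemma block_ok_support_code:
  assumes B: "block_ok d p \<eta> x z \<delta>" and bin: "\<forall>k\<in>{1..Kdim d}. \<delta> k \<in> {0, 1}"
    and "j \<le> d" "Tmap d z j \<noteq> 0" "k \<in> {1..Kdim d}"
  shows "\<eta> j k \<longleftrightarrow> \<delta> k = 1"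
proof -
  have vanish: "Tmap d z i = 0"
    if "S \<subseteq> {0..d}" "(\<Sum>i\<in>S. Tmap d z i) \<le> 0" "i \<in> S" for S i
  proof -
    have "finite S"
      using that(1) finite_subset by blast
    moreover have nonneg: "\<forall>i\<in>S. 0 \<le> Tmap d z i"
      using that(1) block_ok_Tmap_nonneg[OF B] by auto
    moreover have "(\<Sum>i\<in>S. Tmap d z i) = 0"
      using that(2) sum_nonneg[of S "Tmap d z"] nonneg by (meson antisym)
    ultimately show ?thesis
      using sum_nonneg_eq_0_iff that(3) by blast
  qed
  show ?thesis
  proof (cases "\<delta> k = 1")
    case True
    then have "(\<Sum>i\<in>{0..d} - Aset \<eta> d k. Tmap d z i) \<le> 0"
      using B assms(5) unfolding block_ok_def by fastforce
    then show ?thesis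
      using vanish[of "{0..d} - Aset \<eta> d k" j] assms(3,4) True by (auto simp: Aset_def)
  next
    case False
    then have "(\<Sum>i\<in>Aset \<eta> d k. Tmap d z i) \<le> 0"
      using B bin assms(5) unfolding block_ok_def by fastforce
    moreover have "Aset \<eta> d k \<subseteq> {0..d}"
      by (auto simp: Aset_def)
    ultimately have "j \<notin> Aset \<eta> d k"
      using vanish assms(4) by blast
    then show ?thesis
      using assms(3) False by (auto simp: Aset_def)
  qed
qed

lemma block_ok_binary_unit:
  assumes B: "block_ok d p \<eta> x z \<delta>" and bin: "\<forall>k\<in>{1..Kdim d}. \<delta> k \<in> {0, 1}"
    and codes: "\<forall>t\<in>{0..d}. \<forall>t'\<in>{0..d}. t \<noteq> t' \<longrightarrow> (\<exists>k\<in>{1..Kdim d}. \<eta> t k \<noteq> \<eta> t' k)"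
  obtains t where "t \<le> d" "\<forall>k\<le>d. Tmap d z k = of_bool (k = t)"
proof -
  obtain t where t: "t \<le> d" "Tmap d z t \<noteq> 0"
    using sum_Tmap[of d z] by (metis atLeastAtMost_iff sum.neutral zero_neq_one)
  have others: "Tmap d z j = 0" if "j \<le> d" "j \<noteq> t" for j
  proof (rule ccontr)
    assume "Tmap d z j \<noteq> 0"
    then have "\<forall>k\<in>{1..Kdim d}. \<eta> j k = \<eta> t k"
      using block_ok_support_code[OF B bin] t that by simp
    then show False
      using codes[rule_format, of j t] that t by auto
  qed
  have "(\<Sum>k\<in>{0..d} - {t}. Tmap d z k) = 0"
    using others by (intro sum.neutral) auto
  then have "Tmap d z t = 1"
    using sum_Tmap[of d z] sum.remove[of "{0..d}" t "Tmap d z"] t(1) by simp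
  with t others show ?thesis
    by (intro that[of t]) auto
qed

lemma convex_comb_le:
  fixes a b a' b' u :: real
  assumes "a \<le> b" "a' \<le> b'" "0 \<le> u" "u \<le> 1"
  shows "(1 - u) * a + u * a' \<le> (1 - u) * b + u * b'"
  using assms by (intro add_mono mult_left_mono) auto

lemma block_ok_affine_comb:
  assumes B: "block_ok d p \<eta> x z \<delta>" and B': "block_ok d p \<eta> x' z' \<delta>'" and u: "0 \<le> u" "u \<le> 1"
  shows "block_ok d p \<eta> ((1 - u) * x + u * x') ((1 - u) *\<^sub>R z + u *\<^sub>R z') ((1 - u) *\<^sub>R \<delta> + u *\<^sub>R \<delta>')"
proof -
  let ?z = "(1 - u) *\<^sub>R z + u *\<^sub>R z'" and ?\<delta> = "(1 - u) *\<^sub>R \<delta> + u *\<^sub>R \<delta>'"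
  have sums: "(\<Sum>j\<in>S. Tmap d ?z j) = (1 - u) * (\<Sum>j\<in>S. Tmap d z j) + u * (\<Sum>j\<in>S. Tmap d z' j)" for S
    by (simp add: Tmap_affine_comb sum.distrib sum_distrib_left)
  have "?z \<in> Delta d"
    using B B' u convex_Delta[of d] by (simp add: block_ok_def convex_alt)
  moreover have "(1 - u) * x + u * x' = (\<Sum>k\<le>d. Tmap d ?z k * p k)"
    using sums[of "{..d}"] block_ok_x_eq[OF B] block_ok_x_eq[OF B']
    by (simp add: Tmap_affine_comb distrib_right sum.distrib sum_distrib_left mult.assoc)
  moreover have "0 \<le> ?\<delta> k \<and> ?\<delta> k \<le> 1 \<and> (\<Sum>j\<in>Aset \<eta> d k. Tmap d ?z j) \<le> ?\<delta> k
      \<and> (\<Sum>j\<in>{0..d} - Aset \<eta> d k. Tmap d ?z j) \<le> 1 - ?\<delta> k" if "k \<in> {1..Kdim d}" for k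
  proof -
    have "1 - ?\<delta> k = (1 - u) * (1 - \<delta> k) + u * (1 - \<delta>' k)"
      by (simp add: algebra_simps)
    then show ?thesis
      using B B' u that unfolding block_ok_def sums
      by (auto intro!: convex_comb_le convex_bound_le)
  qed
  ultimately show ?thesis
    using B B' unfolding block_ok_def inB_def affine_sum_eq_sum_Tmap by auto
qed

section \<open>Staircases\<close>

declare jvec.simps(2) [simp del]

lemma card_less_Suc:
  "card {s. s < Suc t \<and> P s} = card {s. s < t \<and> P s} + (if P t then 1 else 0)"
proof -
  have "{s. s < Suc t \<and> P s} = {s. s < t \<and> P s} \<union> (if P t then {t} else {})"
    by (auto simp: less_Suc_eq)
  then show ?thesis
    by (auto simp: card_insert_if)
qed

lemma jvec_eq_card:
  assumes "\<forall>s<length \<pi>. fst (\<pi> ! s) \<in> {1, 2}" "t \<le> length \<pi>"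
  shows "jvec \<pi> t = (card {s. s < t \<and> fst (\<pi> ! s) = 1}, card {s. s < t \<and> fst (\<pi> ! s) = 2})"
  using assms(2)
proof (induction t)
  case (Suc t)
  then have "fst (\<pi> ! t) \<in> {1, 2}"
    using assms(1) by auto
  with Suc show ?case
    by (auto simp: card_less_Suc unitv_def jvec.simps)
qed simp

lemma staircases_length: "\<pi> \<in> staircases d1 d2 \<Longrightarrow> length \<pi> = d1 + d2"
  by (simp add: staircases_def)

lemma jvec_staircase_bounded:
  assumes "\<pi> \<in> staircases d1 d2" "t \<le> d1 + d2"
  shows "fst (jvec \<pi> t) \<le> d1" "snd (jvec \<pi> t) \<le> d2"
    and "t = d1 + d2 \<Longrightarrow> jvec \<pi> t = (d1, d2)"
proof -
  have dir: "\<forall>s<length \<pi>. fst (\<pi> ! s) \<in> {1, 2}" and len: "length \<pi> = d1 + d2"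
    using assms(1) by (simp_all add: staircases_def)
  have "card {s. s < t \<and> fst (\<pi> ! s) = 1} \<le> card {s. s < length \<pi> \<and> fst (\<pi> ! s) = 1}"
    "card {s. s < t \<and> fst (\<pi> ! s) = 2} \<le> card {s. s < length \<pi> \<and> fst (\<pi> ! s) = 2}"
    using assms(2) len by (auto intro!: card_mono)
  then show "fst (jvec \<pi> t) \<le> d1" "snd (jvec \<pi> t) \<le> d2"
    using assms jvec_eq_card[OF dir, of t] len by (simp_all add: staircases_def)
  show "t = d1 + d2 \<Longrightarrow> jvec \<pi> t = (d1, d2)"
    using assms jvec_eq_card[OF dir, of t] len by (simp add: staircases_def)
qed

lemma staircase_step:
  assumes "\<pi> \<in> staircases d1 d2" "t < d1 + d2" "jvec \<pi> t = (i, k)"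
  shows "\<pi> ! t = (1, Suc i) \<and> jvec \<pi> (Suc t) = (Suc i, k)
    \<or> \<pi> ! t = (2, Suc k) \<and> jvec \<pi> (Suc t) = (i, Suc k)"
proof -
  have dir: "\<forall>s<length \<pi>. fst (\<pi> ! s) \<in> {1, 2}" and len: "length \<pi> = d1 + d2"
    and lab: "snd (\<pi> ! t) = card {s. s \<le> t \<and> fst (\<pi> ! s) = fst (\<pi> ! t)}"
    using assms(1,2) by (simp_all add: staircases_def)
  have "{s. s \<le> t \<and> fst (\<pi> ! s) = fst (\<pi> ! t)} = {s. s < Suc t \<and> fst (\<pi> ! s) = fst (\<pi> ! t)}"
    by auto
  then have "snd (\<pi> ! t) = Suc (card {s. s < t \<and> fst (\<pi> ! s) = fst (\<pi> ! t)})"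
    using lab by (simp add: card_less_Suc)
  moreover have "fst (\<pi> ! t) \<in> {1, 2}"
    using dir len assms(2) by simp
  ultimately show ?thesis
    using assms(3) jvec_eq_card[OF dir, of t] len assms(2)
    by (cases "\<pi> ! t") (auto simp: unitv_def jvec.simps)
qed

lemma staircase_entries:
  assumes "\<pi> \<in> staircases d1 d2" "x \<in> set \<pi>"
  shows "x \<in> {1} \<times> {1..d1} \<union> {2} \<times> {1..d2}"
proof -
  obtain t where t: "t < d1 + d2" "x = \<pi> ! t"
    using assms by (auto simp: in_set_conv_nth staircases_length)
  obtain i k where ik: "jvec \<pi> t = (i, k)"
    by fastforce
  have "fst (jvec \<pi> (Suc t)) \<le> d1" "snd (jvec \<pi> (Suc t)) \<le> d2"
    using jvec_staircase_bounded(1,2)[OF assms(1), of "Suc t"] t(1) by simp_all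
  then show ?thesis
    using staircase_step[OF assms(1) t(1) ik] t(2) by auto
qed

lemma Collect_nth_snoc:
  "t \<le> length xs \<Longrightarrow> {s. s < t \<and> P ((xs @ [x]) ! s)} = {s. s < t \<and> P (xs ! s)}"
  by (auto simp: nth_append)

lemma card_nth_snoc:
  "card {s. s < length (xs @ [x]) \<and> P ((xs @ [x]) ! s)}
    = card {s. s < length xs \<and> P (xs ! s)} + (if P x then 1 else 0)"
  by (simp add: card_less_Suc Collect_nth_snoc)

lemma staircases_snoc_step:
  assumes "\<pi> \<in> staircases d1 d2" "fst x \<in> {1, 2}"
    and x: "snd x = Suc (card {t. t < length \<pi> \<and> fst (\<pi> ! t) = fst x})"
  shows "\<pi> @ [x] \<in> staircases (d1 + (if fst x = 1 then 1 else 0)) (d2 + (if fst x = 2 then 1 else 0))"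
proof -
  have len: "length \<pi> = d1 + d2" and dir: "\<forall>t<length \<pi>. fst (\<pi> ! t) \<in> {1, 2}"
    and c1: "card {t. t < length \<pi> \<and> fst (\<pi> ! t) = 1} = d1"
    and c2: "card {t. t < length \<pi> \<and> fst (\<pi> ! t) = 2} = d2"
    and lab: "\<forall>t<length \<pi>. snd (\<pi> ! t) = card {s. s \<le> t \<and> fst (\<pi> ! s) = fst (\<pi> ! t)}"
    using assms(1) unfolding staircases_def by blast+
  have le_Suc: "{s. s \<le> t \<and> P s} = {s. s < Suc t \<and> P s}" for t P
    by auto
  show ?thesis
    unfolding staircases_def
  proof (intro CollectI conjI allI impI)
    show "length (\<pi> @ [x]) = d1 + (if fst x = 1 then 1 else 0) + (d2 + (if fst x = 2 then 1 else 0))"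
      using len assms(2) by auto
    show "card {t. t < length (\<pi> @ [x]) \<and> fst ((\<pi> @ [x]) ! t) = 1} = d1 + (if fst x = 1 then 1 else 0)"
      "card {t. t < length (\<pi> @ [x]) \<and> fst ((\<pi> @ [x]) ! t) = 2} = d2 + (if fst x = 2 then 1 else 0)"
      using card_nth_snoc[where xs = \<pi> and x = x and P = "\<lambda>y. fst y = 1"]
        card_nth_snoc[where xs = \<pi> and x = x and P = "\<lambda>y. fst y = 2"] c1 c2
      by simp_all
    fix t
    assume t: "t < length (\<pi> @ [x])"
    then show "fst ((\<pi> @ [x]) ! t) \<in> {1, 2}"
      using dir assms(2) by (auto simp: nth_append less_Suc_eq)
    show "snd ((\<pi> @ [x]) ! t) = card {s. s \<le> t \<and> fst ((\<pi> @ [x]) ! s) = fst ((\<pi> @ [x]) ! t)}"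
    proof (cases "t < length \<pi>")
      case True
      have "(\<pi> @ [x]) ! t = \<pi> ! t"
        and "{s. s \<le> t \<and> fst ((\<pi> @ [x]) ! s) = fst (\<pi> ! t)} = {s. s \<le> t \<and> fst (\<pi> ! s) = fst (\<pi> ! t)}"
        using True by (auto simp: nth_append)
      with True lab show ?thesis
        by simp
    next
      case False
      with t have "t = length \<pi>"
        by simp
      with x show ?thesis
        using Collect_nth_snoc[where t = "length \<pi>" and P = "\<lambda>y. fst y = fst x" and x = x]
        unfolding le_Suc by (simp add: card_less_Suc)
    qed
  qed
qed

lemma staircases_snoc:
  assumes "\<pi> \<in> staircases d1 d2"
  shows "\<pi> @ [(1, Suc d1)] \<in> staircases (Suc d1) d2"
    and "\<pi> @ [(2, Suc d2)] \<in> staircases d1 (Suc d2)"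
proof -
  have "card {t. t < length \<pi> \<and> fst (\<pi> ! t) = 1} = d1" "card {t. t < length \<pi> \<and> fst (\<pi> ! t) = 2} = d2"
    using assms unfolding staircases_def by blast+
  then show "\<pi> @ [(1, Suc d1)] \<in> staircases (Suc d1) d2" "\<pi> @ [(2, Suc d2)] \<in> staircases d1 (Suc d2)"
    using staircases_snoc_step[OF assms, of "(1, Suc d1)"] staircases_snoc_step[OF assms, of "(2, Suc d2)"]
    by simp_all
qed

definition stair_coord :: "(nat \<Rightarrow> real) \<Rightarrow> (nat \<Rightarrow> real) \<Rightarrow> nat \<times> nat \<Rightarrow> real" where
  "stair_coord a b y = (if fst y = 1 then a else b) (snd y)"

lemma stair_expr_eq:
  "stair_expr \<psi> \<pi> a b = \<psi> (jvec \<pi> 0)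
    + (\<Sum>t=1..length \<pi>. (\<psi> (jvec \<pi> t) - \<psi> (jvec \<pi> (t - 1))) * stair_coord a b (\<pi> ! (t - 1)))"
  by (simp add: stair_expr_def stair_coord_def)

definition stair_levels :: "(nat \<times> nat) list \<Rightarrow> (nat \<Rightarrow> real) \<Rightarrow> (nat \<Rightarrow> real) \<Rightarrow> real list" where
  "stair_levels \<pi> a b = 1 # map (stair_coord a b) \<pi> @ [0]"

lemma stair_expr_by_parts:
  "stair_expr \<psi> \<pi> a b
    = (\<Sum>t\<le>length \<pi>. (stair_levels \<pi> a b ! t - stair_levels \<pi> a b ! Suc t) * \<psi> (jvec \<pi> t))"
proof -
  let ?u = "\<lambda>t. stair_levels \<pi> a b ! t" and ?g = "\<lambda>t. \<psi> (jvec \<pi> t)"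
  have "?u 0 = 1" "?u (Suc (length \<pi>)) = 0"
    by (simp_all add: stair_levels_def nth_append)
  moreover have "?u t = stair_coord a b (\<pi> ! (t - 1))" if "t \<in> {1..length \<pi>}" for t
    using that by (auto simp: stair_levels_def nth_append nth_Cons')
  then have "(\<Sum>t=1..length \<pi>. (?g t - ?g (t - 1)) * stair_coord a b (\<pi> ! (t - 1)))
      = (\<Sum>t=1..length \<pi>. ?u t * (?g t - ?g (t - 1)))"
    by (intro sum.cong) simp_all
  ultimately show ?thesis
    unfolding sum_diff_mult_by_parts[of ?u ?g] by (simp add: stair_expr_eq)
qed

lemma stair_expr_eq_lessThan:
  "stair_expr \<psi> \<pi> a b = \<psi> (jvec \<pi> 0)
    + (\<Sum>t<length \<pi>. (\<psi> (jvec \<pi> (Suc t)) - \<psi> (jvec \<pi> t)) * stair_coord a b (\<pi> ! t))"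
  unfolding stair_expr_eq by (simp add: sum.atLeast1_atMost_eq)

lemma stair_expr_telescope:
  assumes "\<And>t. t < length \<pi> \<Longrightarrow> (\<psi> (jvec \<pi> (Suc t)) - \<psi> (jvec \<pi> t)) * stair_coord a b (\<pi> ! t)
      = (\<psi> (jvec \<pi> (Suc t)) - \<psi> (jvec \<pi> t)) * c"
  shows "stair_expr \<psi> \<pi> a b = \<psi> (jvec \<pi> 0) + (\<psi> (jvec \<pi> (length \<pi>)) - \<psi> (jvec \<pi> 0)) * c"
proof -
  have "(\<Sum>t<length \<pi>. (\<psi> (jvec \<pi> (Suc t)) - \<psi> (jvec \<pi> t)) * c)
      = (\<Sum>t<length \<pi>. \<psi> (jvec \<pi> (Suc t)) - \<psi> (jvec \<pi> t)) * c"
    by (simp add: sum_distrib_right)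
  then show ?thesis
    using sum_lessThan_telescope[of "\<lambda>t. \<psi> (jvec \<pi> t)" "length \<pi>"]
    by (simp add: stair_expr_eq_lessThan assms)
qed

lemma stair_expr_threshold_fst:
  assumes "\<pi> \<in> staircases d1 d2" "j \<in> {1..d1}"
  shows "stair_expr (\<lambda>y. of_bool (j \<le> fst y)) \<pi> a b = a j"
proof -
  let ?\<psi> = "\<lambda>y. of_bool (j \<le> fst y) :: real"
  have "stair_expr ?\<psi> \<pi> a b = ?\<psi> (jvec \<pi> 0) + (?\<psi> (jvec \<pi> (length \<pi>)) - ?\<psi> (jvec \<pi> 0)) * a j"
  proof (rule stair_expr_telescope)
    fix t assume "t < length \<pi>"
    then show "(?\<psi> (jvec \<pi> (Suc t)) - ?\<psi> (jvec \<pi> t)) * stair_coord a b (\<pi> ! t)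
        = (?\<psi> (jvec \<pi> (Suc t)) - ?\<psi> (jvec \<pi> t)) * a j"
      using staircase_step[OF assms(1) _ surjective_pairing, of t] staircases_length[OF assms(1)]
      by (cases "j = Suc (fst (jvec \<pi> t))") (auto simp: stair_coord_def)
  qed
  then show ?thesis
    using assms jvec_staircase_bounded(3)[OF assms(1)] staircases_length[OF assms(1)] by simp
qed

lemma stair_expr_threshold_snd:
  assumes "\<pi> \<in> staircases d1 d2" "j \<in> {1..d2}"
  shows "stair_expr (\<lambda>y. of_bool (j \<le> snd y)) \<pi> a b = b j"
proof -
  let ?\<psi> = "\<lambda>y. of_bool (j \<le> snd y) :: real"
  have "stair_expr ?\<psi> \<pi> a b = ?\<psi> (jvec \<pi> 0) + (?\<psi> (jvec \<pi> (length \<pi>)) - ?\<psi> (jvec \<pi> 0)) * b j"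
  proof (rule stair_expr_telescope)
    fix t assume "t < length \<pi>"
    then show "(?\<psi> (jvec \<pi> (Suc t)) - ?\<psi> (jvec \<pi> t)) * stair_coord a b (\<pi> ! t)
        = (?\<psi> (jvec \<pi> (Suc t)) - ?\<psi> (jvec \<pi> t)) * b j"
      using staircase_step[OF assms(1) _ surjective_pairing, of t] staircases_length[OF assms(1)]
      by (cases "j = Suc (snd (jvec \<pi> t))") (auto simp: stair_coord_def)
  qed
  then show ?thesis
    using assms jvec_staircase_bounded(3)[OF assms(1)] staircases_length[OF assms(1)] by simp
qed

lemma stair_coord_bounds:
  assumes a: "a \<in> Delta d1" and b: "b \<in> Delta d2"
    and "\<pi> \<in> staircases e1 e2" "e1 \<le> d1" "e2 \<le> d2" "y \<in> set \<pi>"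
  shows "min (ext d1 a e1) (ext d2 b e2) \<le> stair_coord a b y" "stair_coord a b y \<le> 1"
proof -
  have "y \<in> {1} \<times> {1..e1} \<union> {2} \<times> {1..e2}"
    using staircase_entries assms(3,6) .
  then consider j where "y = (1, j)" "j \<in> {1..e1}" | k where "y = (2, k)" "k \<in> {1..e2}"
    by blast
  then have "min (ext d1 a e1) (ext d2 b e2) \<le> stair_coord a b y \<and> stair_coord a b y \<le> 1"
  proof cases
    case 1
    then have "stair_coord a b y = ext d1 a j"
      using assms(4) by (simp add: stair_coord_def ext_def)
    then show ?thesis
      using Delta_antimono[OF a, of j e1] Delta_antimono[OF a, of 0 j] 1 assms(4) by auto
  next
    case 2
    then have "stair_coord a b y = ext d2 b k"
      using assms(5) by (simp add: stair_coord_def ext_def)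
    then show ?thesis
      using Delta_antimono[OF b, of k e2] Delta_antimono[OF b, of 0 k] 2 assms(5) by auto
  qed
  then show "min (ext d1 a e1) (ext d2 b e2) \<le> stair_coord a b y" "stair_coord a b y \<le> 1"
    by simp_all
qed

lemma sorted_stair_coords_snoc:
  assumes a: "a \<in> Delta d1" and b: "b \<in> Delta d2"
    and \<pi>: "\<pi> \<in> staircases e1 e2" "e1 \<le> d1" "e2 \<le> d2"
    and sorted: "sorted_wrt (\<ge>) (map (stair_coord a b) \<pi>)"
    and x: "stair_coord a b x \<le> min (ext d1 a e1) (ext d2 b e2)"
  shows "sorted_wrt (\<ge>) (map (stair_coord a b) (\<pi> @ [x]))"
proof -
  have "stair_coord a b x \<le> stair_coord a b y" if "y \<in> set \<pi>" for y
    using stair_coord_bounds(1)[OF a b \<pi> that] x by linarith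
  with sorted show ?thesis
    by (simp add: sorted_wrt_append)
qed

lemma sorted_stair_coords_snoc_fst:
  assumes a: "a \<in> Delta d1" and b: "b \<in> Delta d2"
    and \<pi>: "\<pi> \<in> staircases e e2" "Suc e \<le> d1" "e2 \<le> d2" "sorted_wrt (\<ge>) (map (stair_coord a b) \<pi>)"
    and "ext d1 a (Suc e) \<le> ext d2 b e2"
  shows "sorted_wrt (\<ge>) (map (stair_coord a b) (\<pi> @ [(1, Suc e)]))"
proof -
  have "stair_coord a b (1, Suc e) = ext d1 a (Suc e)"
    using \<pi>(2) by (simp add: stair_coord_def ext_def)
  moreover have "ext d1 a (Suc e) \<le> ext d1 a e"
    using Delta_antimono[OF a, of e "Suc e"] \<pi>(2) by simp
  ultimately show ?thesis
    using sorted_stair_coords_snoc[OF a b \<pi>(1) _ \<pi>(3,4), of "(1, Suc e)"] \<pi>(2) assms(7) by simp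
qed

lemma sorted_stair_coords_snoc_snd:
  assumes a: "a \<in> Delta d1" and b: "b \<in> Delta d2"
    and \<pi>: "\<pi> \<in> staircases e1 e" "e1 \<le> d1" "Suc e \<le> d2" "sorted_wrt (\<ge>) (map (stair_coord a b) \<pi>)"
    and "ext d2 b (Suc e) \<le> ext d1 a e1"
  shows "sorted_wrt (\<ge>) (map (stair_coord a b) (\<pi> @ [(2, Suc e)]))"
proof -
  have "stair_coord a b (2, Suc e) = ext d2 b (Suc e)"
    using \<pi>(3) by (simp add: stair_coord_def ext_def)
  moreover have "ext d2 b (Suc e) \<le> ext d2 b e"
    using Delta_antimono[OF b, of e "Suc e"] \<pi>(3) by simp
  ultimately show ?thesis
    using sorted_stair_coords_snoc[OF a b \<pi>(1,2) _ \<pi>(4), of "(2, Suc e)"] \<pi>(3) assms(7) by simp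
qed

text \<open>Merging the coordinates of \<open>a\<close> and \<open>b\<close> in decreasing order, from the back.\<close>
lemma sorted_stair_coords_exist:
  assumes a: "a \<in> Delta d1" and b: "b \<in> Delta d2" and "e1 \<le> d1" "e2 \<le> d2"
  shows "\<exists>\<pi>\<in>staircases e1 e2. sorted_wrt (\<ge>) (map (stair_coord a b) \<pi>)"
  using assms(3,4)
proof (induction "e1 + e2" arbitrary: e1 e2)
  case 0
  then show ?case
    by (intro bexI[of _ "[]"]) (auto simp: staircases_def)
next
  case (Suc n)
  let ?A = "ext d1 a" and ?B = "ext d2 b"
  have "?A e1 \<le> 1" "?B e2 \<le> 1"
    using Delta_antimono[OF a, of 0 e1] Delta_antimono[OF b, of 0 e2] Suc.prems by simp_all
  then consider (first) "0 < e1" "?A e1 \<le> ?B e2" | (second) "0 < e2" "?B e2 \<le> ?A e1"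
    using Suc.hyps(2) by (cases "e1 = 0"; cases "e2 = 0") force+
  then show ?case
  proof cases
    case first
    then obtain e where e: "e1 = Suc e"
      using gr0_implies_Suc by blast
    then obtain \<pi> where \<pi>: "\<pi> \<in> staircases e e2" "sorted_wrt (\<ge>) (map (stair_coord a b) \<pi>)"
      using Suc.hyps(1)[of e e2] Suc.hyps(2) Suc.prems by auto
    then show ?thesis
      using sorted_stair_coords_snoc_fst[OF a b \<pi>(1) _ _ \<pi>(2)] staircases_snoc(1)[OF \<pi>(1)] first e Suc.prems
      by blast
  next
    case second
    then obtain e where e: "e2 = Suc e"
      using gr0_implies_Suc by blast
    then obtain \<pi> where \<pi>: "\<pi> \<in> staircases e1 e" "sorted_wrt (\<ge>) (map (stair_coord a b) \<pi>)"
      using Suc.hyps(1)[of e1 e] Suc.hyps(2) Suc.prems by auto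
    then show ?thesis
      using sorted_stair_coords_snoc_snd[OF a b \<pi>(1) _ _ \<pi>(2)] staircases_snoc(2)[OF \<pi>(1)] second e Suc.prems
      by blast
  qed
qed

lemma sorted_staircase_exists:
  assumes a: "a \<in> Delta d1" and b: "b \<in> Delta d2"
  shows "\<exists>\<pi>\<in>staircases d1 d2. sorted_wrt (\<ge>) (stair_levels \<pi> a b)"
proof -
  obtain \<pi> where \<pi>: "\<pi> \<in> staircases d1 d2" "sorted_wrt (\<ge>) (map (stair_coord a b) \<pi>)"
    using sorted_stair_coords_exist[OF a b order.refl order.refl] by blast
  have "0 \<le> min (ext d1 a d1) (ext d2 b d2)"
    using Delta_antimono[OF a, of d1 "Suc d1"] Delta_antimono[OF b, of d2 "Suc d2"] by simp
  then have "0 \<le> stair_coord a b y \<and> stair_coord a b y \<le> 1" if "y \<in> set \<pi>" for y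
    using stair_coord_bounds[OF a b \<pi>(1) order.refl order.refl that] by linarith
  with \<pi> show ?thesis
    by (intro bexI[of _ \<pi>]) (auto simp: stair_levels_def sorted_wrt_append)
qed

text \<open>The staircase triangulation of \<open>\<Delta>\<^sup>d\<^sup>1 \<times> \<Delta>\<^sup>d\<^sup>2\<close>: the weights are the gaps between
  consecutive levels of a sorted staircase.\<close>
lemma staircase_decomposition:
  assumes "a \<in> Delta d1" "b \<in> Delta d2"
  obtains \<pi> w where "\<pi> \<in> staircases d1 d2" "\<forall>t\<le>d1 + d2. 0 \<le> w t" "(\<Sum>t\<le>d1 + d2. w t) = 1"
    and "\<And>\<psi>. stair_expr \<psi> \<pi> a b = (\<Sum>t\<le>d1 + d2. w t * \<psi> (jvec \<pi> t))"
    and "\<forall>j\<in>{1..d1}. a j = (\<Sum>t\<le>d1 + d2. w t * of_bool (j \<le> fst (jvec \<pi> t)))"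
    and "\<forall>j\<in>{1..d2}. b j = (\<Sum>t\<le>d1 + d2. w t * of_bool (j \<le> snd (jvec \<pi> t)))"
proof -
  obtain \<pi> where \<pi>: "\<pi> \<in> staircases d1 d2" and sorted: "sorted_wrt (\<ge>) (stair_levels \<pi> a b)"
    using sorted_staircase_exists[OF assms] by blast
  define w where "w t = stair_levels \<pi> a b ! t - stair_levels \<pi> a b ! Suc t" for t
  have len: "length \<pi> = d1 + d2"
    using staircases_length[OF \<pi>] .
  have expr: "stair_expr \<psi> \<pi> a b = (\<Sum>t\<le>d1 + d2. w t * \<psi> (jvec \<pi> t))" for \<psi>
    using stair_expr_by_parts[of \<psi> \<pi> a b] len by (simp add: w_def)
  have "0 \<le> w t" if "t \<le> d1 + d2" for t
    using sorted_wrt_nth_less[OF sorted, of t "Suc t"] that len by (simp add: w_def stair_levels_def)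
  moreover have "(\<Sum>t\<le>d1 + d2. w t) = 1"
    using expr[of "\<lambda>_. 1"] by (simp add: stair_expr_def)
  moreover have "\<forall>j\<in>{1..d1}. a j = (\<Sum>t\<le>d1 + d2. w t * of_bool (j \<le> fst (jvec \<pi> t)))"
    using stair_expr_threshold_fst[OF \<pi>, of _ a b] expr by simp
  moreover have "\<forall>j\<in>{1..d2}. b j = (\<Sum>t\<le>d1 + d2. w t * of_bool (j \<le> snd (jvec \<pi> t)))"
    using stair_expr_threshold_snd[OF \<pi>, of _ a b] expr by simp
  ultimately show ?thesis
    using that \<pi> expr by blast
qed

lemma stair_expr_uminus: "stair_expr (\<lambda>y. - \<psi> y) \<pi> a b = - stair_expr \<psi> \<pi> a b"
  by (simp add: stair_expr_eq_lessThan sum_negf[symmetric] algebra_simps)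

lemma stair_expr_affine_comb:
  "stair_expr \<psi> \<pi> ((1 - u) *\<^sub>R a + u *\<^sub>R a') ((1 - u) *\<^sub>R b + u *\<^sub>R b')
    = (1 - u) * stair_expr \<psi> \<pi> a b + u * stair_expr \<psi> \<pi> a' b'"
proof -
  let ?D = "\<lambda>t. \<psi> (jvec \<pi> (Suc t)) - \<psi> (jvec \<pi> t)"
  have "stair_coord ((1 - u) *\<^sub>R a + u *\<^sub>R a') ((1 - u) *\<^sub>R b + u *\<^sub>R b') y
      = (1 - u) * stair_coord a b y + u * stair_coord a' b' y" for y
    by (simp add: stair_coord_def)
  then have "(\<Sum>t<length \<pi>. ?D t * stair_coord ((1 - u) *\<^sub>R a + u *\<^sub>R a') ((1 - u) *\<^sub>R b + u *\<^sub>R b') (\<pi> ! t))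
      = (1 - u) * (\<Sum>t<length \<pi>. ?D t * stair_coord a b (\<pi> ! t))
        + u * (\<Sum>t<length \<pi>. ?D t * stair_coord a' b' (\<pi> ! t))"
    by (simp add: distrib_left sum.distrib sum_distrib_left mult.left_commute)
  then show ?thesis
    by (simp add: stair_expr_eq_lessThan algebra_simps)
qed

section \<open>Supermodularity\<close>

definition supermodular_on :: "nat \<Rightarrow> nat \<Rightarrow> (nat \<times> nat \<Rightarrow> real) \<Rightarrow> bool" where
  "supermodular_on d1 d2 \<psi> \<longleftrightarrow>
    (\<forall>i<d1. \<forall>k<d2. \<psi> (Suc i, k) + \<psi> (i, Suc k) \<le> \<psi> (Suc i, Suc k) + \<psi> (i, k))"

lemma supermodular_onD:
  "supermodular_on d1 d2 \<psi> \<Longrightarrow> i < d1 \<Longrightarrow> k < d2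
    \<Longrightarrow> \<psi> (Suc i, k) + \<psi> (i, Suc k) \<le> \<psi> (Suc i, Suc k) + \<psi> (i, k)"
  by (simp add: supermodular_on_def)

lemma supermodular_on_increments:
  assumes "supermodular_on d1 d2 \<psi>"
  shows "i < d1 \<Longrightarrow> k \<le> k' \<Longrightarrow> k' \<le> d2 \<Longrightarrow> \<psi> (Suc i, k) - \<psi> (i, k) \<le> \<psi> (Suc i, k') - \<psi> (i, k')"
    and "k < d2 \<Longrightarrow> i \<le> i' \<Longrightarrow> i' \<le> d1 \<Longrightarrow> \<psi> (i, Suc k) - \<psi> (i, k) \<le> \<psi> (i', Suc k) - \<psi> (i', k)"
proof -
  show "\<psi> (Suc i, k) - \<psi> (i, k) \<le> \<psi> (Suc i, k') - \<psi> (i, k')" if "i < d1" "k \<le> k'" "k' \<le> d2"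
  proof (rule lift_Suc_mono_le_ivl[where f = "\<lambda>k. \<psi> (Suc i, k) - \<psi> (i, k)" and N = "{..<d2}"])
    show "\<psi> (Suc i, n) - \<psi> (i, n) \<le> \<psi> (Suc i, Suc n) - \<psi> (i, Suc n)" if "n \<in> {..<d2}" for n
      using supermodular_onD[OF assms \<open>i < d1\<close>, of n] that by simp
  qed (use that in auto)
  show "\<psi> (i, Suc k) - \<psi> (i, k) \<le> \<psi> (i', Suc k) - \<psi> (i', k)" if "k < d2" "i \<le> i'" "i' \<le> d1"
  proof (rule lift_Suc_mono_le_ivl[where f = "\<lambda>i. \<psi> (i, Suc k) - \<psi> (i, k)" and N = "{..<d1}"])
    show "\<psi> (n, Suc k) - \<psi> (n, k) \<le> \<psi> (Suc n, Suc k) - \<psi> (Suc n, k)" if "n \<in> {..<d1}" for n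
      using supermodular_onD[OF assms _ \<open>k < d2\<close>, of n] that by simp
  qed (use that in auto)
qed

lemma supermodular_on_product:
  fixes A B :: "nat \<Rightarrow> real"
  assumes "\<forall>j<d1. A j \<le> A (Suc j)" "\<forall>j<d2. B j \<le> B (Suc j)"
  shows "supermodular_on d1 d2 (\<lambda>(i, k). A i * B k)"
proof -
  have "0 \<le> (A (Suc i) - A i) * (B (Suc k) - B k)" if "i < d1" "k < d2" for i k
    using assms that by simp
  then show ?thesis
    by (simp add: supermodular_on_def algebra_simps)
qed

lemma supermodular_clipped_step:
  assumes \<pi>: "\<pi> \<in> staircases d1 d2" and sm: "supermodular_on d1 d2 \<psi>"
    and a: "\<forall>j\<in>{1..d1}. a j = of_bool (j \<le> s1)" and b: "\<forall>j\<in>{1..d2}. b j = of_bool (j \<le> s2)"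
    and "T < d1 + d2"
  shows "\<psi> (min (fst (jvec \<pi> (Suc T))) s1, min (snd (jvec \<pi> (Suc T))) s2)
    \<le> \<psi> (min (fst (jvec \<pi> T)) s1, min (snd (jvec \<pi> T)) s2)
      + (\<psi> (jvec \<pi> (Suc T)) - \<psi> (jvec \<pi> T)) * stair_coord a b (\<pi> ! T)"
proof -
  obtain i k where ik: "jvec \<pi> T = (i, k)"
    by fastforce
  have bounds: "fst (jvec \<pi> (Suc T)) \<le> d1" "snd (jvec \<pi> (Suc T)) \<le> d2"
    using jvec_staircase_bounded[OF \<pi>, of "Suc T"] assms(5) by simp_all
  show ?thesis
    using staircase_step[OF \<pi> assms(5) ik]
  proof (elim disjE conjE)
    assume step: "\<pi> ! T = (1, Suc i)" "jvec \<pi> (Suc T) = (Suc i, k)"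
    show ?thesis
    proof (cases "Suc i \<le> s1")
      case True
      have "\<psi> (Suc i, min k s2) - \<psi> (i, min k s2) \<le> \<psi> (Suc i, k) - \<psi> (i, k)"
        using supermodular_on_increments(1)[OF sm] bounds step by simp
      then show ?thesis
        using True step ik a bounds by (simp add: stair_coord_def min_def)
    qed (use step ik a bounds in \<open>simp add: stair_coord_def\<close>)
  next
    assume step: "\<pi> ! T = (2, Suc k)" "jvec \<pi> (Suc T) = (i, Suc k)"
    show ?thesis
    proof (cases "Suc k \<le> s2")
      case True
      have "\<psi> (min i s1, Suc k) - \<psi> (min i s1, k) \<le> \<psi> (i, Suc k) - \<psi> (i, k)"
        using supermodular_on_increments(2)[OF sm] bounds step by simp
      then show ?thesis
        using True step ik b bounds by (simp add: stair_coord_def min_def)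
    qed (use step ik b bounds in \<open>simp add: stair_coord_def\<close>)
  qed
qed

text \<open>At a vertex \<open>(s\<^sub>1, s\<^sub>2)\<close> the staircase expression sums the increments of \<open>\<psi>\<close> along the
  steps of \<open>\<pi>\<close> that enter the box \<open>[0, s\<^sub>1] \<times> [0, s\<^sub>2]\<close>; by supermodularity each of them
  dominates the corresponding increment of the path clipped to the box, which ends at
  \<open>(s\<^sub>1, s\<^sub>2)\<close>.\<close>
lemma supermodular_le_stair_expr:
  assumes \<pi>: "\<pi> \<in> staircases d1 d2" and sm: "supermodular_on d1 d2 \<psi>"
    and s: "s1 \<le> d1" "s2 \<le> d2"
    and a: "\<forall>j\<in>{1..d1}. a j = of_bool (j \<le> s1)" and b: "\<forall>j\<in>{1..d2}. b j = of_bool (j \<le> s2)"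
  shows "\<psi> (s1, s2) \<le> stair_expr \<psi> \<pi> a b"
proof -
  have "\<psi> (min (fst (jvec \<pi> T)) s1, min (snd (jvec \<pi> T)) s2)
      \<le> \<psi> (jvec \<pi> 0) + (\<Sum>t<T. (\<psi> (jvec \<pi> (Suc t)) - \<psi> (jvec \<pi> t)) * stair_coord a b (\<pi> ! t))"
    if "T \<le> d1 + d2" for T
    using that
  proof (induction T)
    case (Suc T)
    then show ?case
      using supermodular_clipped_step[OF \<pi> sm a b, of T] by simp
  qed simp
  from this[of "d1 + d2"] show ?thesis
    using jvec_staircase_bounded(3)[OF \<pi>] s staircases_length[OF \<pi>] by (simp add: stair_expr_eq_lessThan)
qed

lemma psi_eq: "psi f1 f2 p1 p2 \<rho>1 \<rho>2 = (\<lambda>(i, k). f1 (p1 (\<rho>1 i)) * f2 (p2 (\<rho>2 k)))"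
  by (simp add: fun_eq_iff psi_def)

text \<open>\<open>(L\<^sup>\<rho>)\<^sup>-\<^sup>1\<close> maps the vertex \<open>(s\<^sub>1, s\<^sub>2)\<close> to the vertex \<open>(\<rho>\<^sub>1\<^sup>-\<^sup>1 s\<^sub>1, \<rho>\<^sub>2\<^sup>-\<^sup>1 s\<^sub>2)\<close>, where
  \<open>\<psi>\<^sup>\<rho>\<close> takes the value \<open>g\<^sub>1 s\<^sub>1 * g\<^sub>2 s\<^sub>2\<close>.\<close>
lemma product_le_stair_expr_at_vertex:
  fixes g1 g2 :: "nat \<Rightarrow> real"
  assumes \<pi>: "\<pi> \<in> staircases d1 d2"
    and \<rho>1: "bij_betw \<rho>1 {0..d1} {0..d1}" and \<rho>2: "bij_betw \<rho>2 {0..d2} {0..d2}"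
    and mono: "\<forall>j<d1. g1 (\<rho>1 j) \<le> g1 (\<rho>1 (Suc j))" "\<forall>j<d2. g2 (\<rho>2 j) \<le> g2 (\<rho>2 (Suc j))"
    and s: "s1 \<le> d1" "s2 \<le> d2"
  shows "g1 s1 * g2 s2 \<le> stair_expr (\<lambda>(i, k). g1 (\<rho>1 i) * g2 (\<rho>2 k)) \<pi>
      (Linv d1 \<rho>1 (simplex_vertex s1)) (Linv d2 \<rho>2 (simplex_vertex s2))"
proof -
  let ?r1 = "inv_into {0..d1} \<rho>1 s1" and ?r2 = "inv_into {0..d2} \<rho>2 s2"
  have r1: "?r1 \<le> d1" "\<rho>1 ?r1 = s1"
    using bij_betw_apply[OF bij_betw_inv_into[OF \<rho>1]] bij_betw_inv_into_right[OF \<rho>1] s(1) by auto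
  have r2: "?r2 \<le> d2" "\<rho>2 ?r2 = s2"
    using bij_betw_apply[OF bij_betw_inv_into[OF \<rho>2]] bij_betw_inv_into_right[OF \<rho>2] s(2) by auto
  have "(\<lambda>(i, k). g1 (\<rho>1 i) * g2 (\<rho>2 k)) (?r1, ?r2)
      \<le> stair_expr (\<lambda>(i, k). g1 (\<rho>1 i) * g2 (\<rho>2 k)) \<pi>
          (Linv d1 \<rho>1 (simplex_vertex s1)) (Linv d2 \<rho>2 (simplex_vertex s2))"
    using supermodular_on_product[OF mono] r1(1) r2(1)
    by (intro supermodular_le_stair_expr[OF \<pi>])
      (simp_all add: Linv_simplex_vertex[OF \<rho>1 s(1)] Linv_simplex_vertex[OF \<rho>2 s(2)])
  then show ?thesis
    using r1 r2 by simp
qed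

section \<open>The relaxation\<close>

lemma convex_relaxation: "convex (relaxation d1 d2 p1 p2 f1 f2 \<sigma>1 \<sigma>2 \<tau>1 \<tau>2 \<eta>1 \<eta>2)"
  unfolding convex_alt relaxation_def
  by (auto simp: block_ok_affine_comb Linv_affine_comb stair_expr_affine_comb intro!: convex_comb_le)

lemma convex_mu_between:
  fixes C :: "pt set"
  assumes "convex C" "(x1, x2, z1, z2, \<mu>l, \<delta>1, \<delta>2) \<in> C" "(x1, x2, z1, z2, \<mu>h, \<delta>1, \<delta>2) \<in> C"
    and "\<mu>l \<le> \<mu>" "\<mu> \<le> \<mu>h"
  shows "(x1, x2, z1, z2, \<mu>, \<delta>1, \<delta>2) \<in> C"
proof (cases "\<mu>l = \<mu>h")
  case False
  define \<theta> where "\<theta> = (\<mu> - \<mu>l) / (\<mu>h - \<mu>l)"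
  have \<theta>: "0 \<le> \<theta>" "\<theta> \<le> 1" "\<theta> * (\<mu>h - \<mu>l) = \<mu> - \<mu>l"
    using assms(4,5) False by (auto simp: \<theta>_def)
  have "(1 - \<theta>) *\<^sub>R (x1, x2, z1, z2, \<mu>l, \<delta>1, \<delta>2) + \<theta> *\<^sub>R (x1, x2, z1, z2, \<mu>h, \<delta>1, \<delta>2) \<in> C"
    using assms(1-3) \<theta>(1,2) unfolding convex_alt by blast
  also have "(1 - \<theta>) *\<^sub>R (x1, x2, z1, z2, \<mu>l, \<delta>1, \<delta>2) + \<theta> *\<^sub>R (x1, x2, z1, z2, \<mu>h, \<delta>1, \<delta>2)
      = (x1, x2, z1, z2, \<mu>, \<delta>1, \<delta>2)"
    using \<theta>(3) by (simp add: scaleR_diff_left algebra_simps)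
  finally show ?thesis .
qed (use assms in simp)

lemma weights_concentrated:
  fixes w :: "'a \<Rightarrow> real"
  assumes "finite I" "\<forall>i\<in>I. 0 \<le> w i" "(\<Sum>i\<in>I. w i * of_bool (P i)) = sum w I" "i \<in> I" "w i \<noteq> 0"
  shows "P i"
proof -
  have "sum w I = sum w (I \<inter> {i. P i}) + sum w (I - {i. P i})"
    by (rule sum.Int_Diff[OF assms(1)])
  with assms(1,3) have "sum w (I - {i. P i}) = 0"
    by simp
  then have "\<forall>j\<in>I - {i. P i}. w j = 0"
    using assms(1,2) by (subst (asm) sum_nonneg_eq_0_iff) auto
  with assms(4,5) show ?thesis
    by blast
qed

locale product_formulation =
  fixes d1 d2 :: nat and p1 p2 :: "nat \<Rightarrow> real" and f1 f2 :: "real \<Rightarrow> real"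
    and \<sigma>1 \<sigma>2 \<tau>1 \<tau>2 :: "nat \<Rightarrow> nat" and \<eta>1 \<eta>2 :: "nat \<Rightarrow> nat \<Rightarrow> bool"
  assumes \<sigma>1: "bij_betw \<sigma>1 {0..d1} {0..d1}" and \<sigma>2: "bij_betw \<sigma>2 {0..d2} {0..d2}"
    and \<sigma>1_sorted: "\<forall>j<d1. f1 (p1 (\<sigma>1 j)) \<le> f1 (p1 (\<sigma>1 (Suc j)))"
    and \<sigma>2_sorted: "\<forall>j<d2. f2 (p2 (\<sigma>2 j)) \<le> f2 (p2 (\<sigma>2 (Suc j)))"
    and \<tau>1: "bij_betw \<tau>1 {0..d1} {0..d1}" and \<tau>2: "bij_betw \<tau>2 {0..d2} {0..d2}"
    and \<tau>1_sorted: "\<forall>j<d1. f1 (p1 (\<tau>1 j)) \<le> f1 (p1 (\<tau>1 (Suc j)))"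
    and \<tau>2_sorted: "\<forall>j<d2. f2 (p2 (\<tau>2 j)) \<ge> f2 (p2 (\<tau>2 (Suc j)))"
    and codes1: "\<forall>t\<in>{0..d1}. \<forall>t'\<in>{0..d1}. t \<noteq> t' \<longrightarrow> (\<exists>k\<in>{1..Kdim d1}. \<eta>1 t k \<noteq> \<eta>1 t' k)"
    and codes2: "\<forall>t\<in>{0..d2}. \<forall>t'\<in>{0..d2}. t \<noteq> t' \<longrightarrow> (\<exists>k\<in>{1..Kdim d2}. \<eta>2 t k \<noteq> \<eta>2 t' k)"
begin

abbreviation Q :: "pt set" where
  "Q \<equiv> relaxation d1 d2 p1 p2 f1 f2 \<sigma>1 \<sigma>2 \<tau>1 \<tau>2 \<eta>1 \<eta>2"

abbreviation stair_value
  :: "(nat \<Rightarrow> nat) \<Rightarrow> (nat \<Rightarrow> nat) \<Rightarrow> (nat \<times> nat) list \<Rightarrow> (nat \<Rightarrow> real) \<Rightarrow> (nat \<Rightarrow> real) \<Rightarrow> real"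
  where "stair_value \<rho>1 \<rho>2 \<pi> z1 z2 \<equiv> stair_expr (psi f1 f2 p1 p2 \<rho>1 \<rho>2) \<pi> (Linv d1 \<rho>1 z1) (Linv d2 \<rho>2 z2)"

definition vertex_point :: "nat \<Rightarrow> nat \<Rightarrow> pt" where
  "vertex_point t1 t2 = (p1 t1, p2 t2, simplex_vertex t1, simplex_vertex t2, f1 (p1 t1) * f2 (p2 t2),
     code_vector \<eta>1 d1 t1, code_vector \<eta>2 d2 t2)"

definition vertex_points :: "pt set" where
  "vertex_points = {vertex_point t1 t2 | t1 t2. t1 \<le> d1 \<and> t2 \<le> d2}"

lemma binary_ok_vertex_point: "binary_ok d1 d2 (vertex_point t1 t2)"
  by (simp add: binary_ok_def vertex_point_def code_vector_def)

lemma vertex_point_in_relaxation: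
  assumes "t1 \<le> d1" "t2 \<le> d2"
  shows "vertex_point t1 t2 \<in> Q"
proof -
  have upper: "f1 (p1 t1) * f2 (p2 t2) \<le> stair_value \<sigma>1 \<sigma>2 \<pi> (simplex_vertex t1) (simplex_vertex t2)"
    if "\<pi> \<in> staircases d1 d2" for \<pi>
    using product_le_stair_expr_at_vertex[OF that \<sigma>1 \<sigma>2 _ _ assms, of "\<lambda>j. f1 (p1 j)" "\<lambda>j. f2 (p2 j)"]
      \<sigma>1_sorted \<sigma>2_sorted by (simp add: psi_eq)
  have "f1 (p1 t1) * - f2 (p2 t2)
      \<le> stair_expr (\<lambda>y. - psi f1 f2 p1 p2 \<tau>1 \<tau>2 y) \<pi> (Linv d1 \<tau>1 (simplex_vertex t1)) (Linv d2 \<tau>2 (simplex_vertex t2))"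
    if "\<pi> \<in> staircases d1 d2" for \<pi>
    using product_le_stair_expr_at_vertex[OF that \<tau>1 \<tau>2 _ _ assms, of "\<lambda>j. f1 (p1 j)" "\<lambda>j. - f2 (p2 j)"]
      \<tau>1_sorted \<tau>2_sorted by (simp add: psi_eq case_prod_beta')
  then have lower: "stair_value \<tau>1 \<tau>2 \<pi> (simplex_vertex t1) (simplex_vertex t2) \<le> f1 (p1 t1) * f2 (p2 t2)"
    if "\<pi> \<in> staircases d1 d2" for \<pi>
    using that by (simp add: stair_expr_uminus)
  show ?thesis
    using upper lower block_ok_vertex assms
    by (simp add: vertex_point_def relaxation_def)
qed

lemma stair_point_eq_comb:
  assumes \<rho>1: "bij_betw \<rho>1 {0..d1} {0..d1}" and \<rho>2: "bij_betw \<rho>2 {0..d2} {0..d2}"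
    and B1: "block_ok d1 p1 \<eta>1 x1 z1 \<delta>1" and B2: "block_ok d2 p2 \<eta>2 x2 z2 \<delta>2"
  obtains \<pi> w s1 s2 where "\<pi> \<in> staircases d1 d2" "\<forall>t\<le>d1 + d2. 0 \<le> w t" "(\<Sum>t\<le>d1 + d2. w t) = 1"
    and "\<forall>t\<le>d1 + d2. s1 t \<le> d1 \<and> s2 t \<le> d2"
    and "(x1, x2, z1, z2, stair_value \<rho>1 \<rho>2 \<pi> z1 z2, \<delta>1, \<delta>2)
      = (\<Sum>t\<le>d1 + d2. w t *\<^sub>R vertex_point (s1 t) (s2 t))"
    and "\<forall>k\<le>d1. Tmap d1 z1 k = (\<Sum>t\<le>d1 + d2. w t * of_bool (s1 t = k))"
    and "\<forall>k\<le>d2. Tmap d2 z2 k = (\<Sum>t\<le>d1 + d2. w t * of_bool (s2 t = k))"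
proof -
  have "Linv d1 \<rho>1 z1 \<in> Delta d1" "Linv d2 \<rho>2 z2 \<in> Delta d2"
    using B1 B2 Linv_in_Delta \<rho>1 \<rho>2 by (simp_all add: block_ok_def)
  then obtain \<pi> w where \<pi>: "\<pi> \<in> staircases d1 d2"
    and w: "\<forall>t\<le>d1 + d2. 0 \<le> w t" "(\<Sum>t\<le>d1 + d2. w t) = 1"
    and expr: "\<And>\<psi>. stair_expr \<psi> \<pi> (Linv d1 \<rho>1 z1) (Linv d2 \<rho>2 z2) = (\<Sum>t\<le>d1 + d2. w t * \<psi> (jvec \<pi> t))"
    and a: "\<forall>j\<in>{1..d1}. Linv d1 \<rho>1 z1 j = (\<Sum>t\<le>d1 + d2. w t * of_bool (j \<le> fst (jvec \<pi> t)))"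
    and b: "\<forall>j\<in>{1..d2}. Linv d2 \<rho>2 z2 j = (\<Sum>t\<le>d1 + d2. w t * of_bool (j \<le> snd (jvec \<pi> t)))"
    using staircase_decomposition by blast
  define s1 where "s1 t = \<rho>1 (fst (jvec \<pi> t))" for t
  define s2 where "s2 t = \<rho>2 (snd (jvec \<pi> t))" for t
  have g1: "\<forall>t\<in>{..d1 + d2}. fst (jvec \<pi> t) \<le> d1" and g2: "\<forall>t\<in>{..d1 + d2}. snd (jvec \<pi> t) \<le> d2"
    using jvec_staircase_bounded[OF \<pi>] by auto
  have lam1: "\<forall>k\<le>d1. Tmap d1 z1 k = (\<Sum>t\<le>d1 + d2. w t * of_bool (s1 t = k))"
    using Tmap_Linv_threshold_comb[OF \<rho>1 _ w(2) g1 a] by (simp add: s1_def)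
  have lam2: "\<forall>k\<le>d2. Tmap d2 z2 k = (\<Sum>t\<le>d1 + d2. w t * of_bool (s2 t = k))"
    using Tmap_Linv_threshold_comb[OF \<rho>2 _ w(2) g2 b] by (simp add: s2_def)
  have s: "\<forall>t\<le>d1 + d2. s1 t \<le> d1 \<and> s2 t \<le> d2"
    using g1 g2 bij_betw_apply[OF \<rho>1] bij_betw_apply[OF \<rho>2] by (auto simp: s1_def s2_def)
  note R1 = block_ok_eq_comb[OF B1 _ w(2) _ lam1] and R2 = block_ok_eq_comb[OF B2 _ w(2) _ lam2]
  have "stair_value \<rho>1 \<rho>2 \<pi> z1 z2 = (\<Sum>t\<le>d1 + d2. w t * (f1 (p1 (s1 t)) * f2 (p2 (s2 t))))"
    by (simp add: expr psi_def s1_def s2_def)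
  then have "(x1, x2, z1, z2, stair_value \<rho>1 \<rho>2 \<pi> z1 z2, \<delta>1, \<delta>2)
      = (\<Sum>t\<le>d1 + d2. w t *\<^sub>R vertex_point (s1 t) (s2 t))"
    using R1 R2 s by (simp add: vertex_point_def prod_eq_iff fst_sum snd_sum)
  with that \<pi> w s lam1 lam2 show ?thesis
    by blast
qed

lemma stair_point_in_hull:
  assumes "bij_betw \<rho>1 {0..d1} {0..d1}" "bij_betw \<rho>2 {0..d2} {0..d2}"
    and "block_ok d1 p1 \<eta>1 x1 z1 \<delta>1" "block_ok d2 p2 \<eta>2 x2 z2 \<delta>2"
  obtains \<pi> where "\<pi> \<in> staircases d1 d2"
    and "(x1, x2, z1, z2, stair_value \<rho>1 \<rho>2 \<pi> z1 z2, \<delta>1, \<delta>2) \<in> convex hull vertex_points"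
proof -
  obtain \<pi> w s1 s2 where \<pi>: "\<pi> \<in> staircases d1 d2"
    and w: "\<forall>t\<le>d1 + d2. 0 \<le> w t" "(\<Sum>t\<le>d1 + d2. w t) = 1" and s: "\<forall>t\<le>d1 + d2. s1 t \<le> d1 \<and> s2 t \<le> d2"
    and eq: "(x1, x2, z1, z2, stair_value \<rho>1 \<rho>2 \<pi> z1 z2, \<delta>1, \<delta>2)
      = (\<Sum>t\<le>d1 + d2. w t *\<^sub>R vertex_point (s1 t) (s2 t))"
    by (rule stair_point_eq_comb[OF assms])
  have "(\<Sum>t\<le>d1 + d2. w t *\<^sub>R vertex_point (s1 t) (s2 t)) \<in> convex hull vertex_points"
    using w s by (intro convex_sum convex_convex_hull hull_inc) (auto simp: vertex_points_def)
  with \<pi> eq that show ?thesis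
    by simp
qed

lemma relaxation_subset_hull: "Q \<subseteq> convex hull vertex_points"
proof
  fix v assume "v \<in> Q"
  then obtain x1 x2 z1 z2 \<mu> \<delta>1 \<delta>2 where v: "v = (x1, x2, z1, z2, \<mu>, \<delta>1, \<delta>2)"
    and B1: "block_ok d1 p1 \<eta>1 x1 z1 \<delta>1" and B2: "block_ok d2 p2 \<eta>2 x2 z2 \<delta>2"
    and bounds: "\<forall>\<pi>\<in>staircases d1 d2.
      \<mu> \<le> stair_value \<sigma>1 \<sigma>2 \<pi> z1 z2 \<and> stair_value \<tau>1 \<tau>2 \<pi> z1 z2 \<le> \<mu>"
    by (auto simp: relaxation_def)
  obtain \<pi>h where "\<pi>h \<in> staircases d1 d2" and hi:
      "(x1, x2, z1, z2, stair_value \<sigma>1 \<sigma>2 \<pi>h z1 z2, \<delta>1, \<delta>2) \<in> convex hull vertex_points"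
    using stair_point_in_hull[OF \<sigma>1 \<sigma>2 B1 B2] .
  moreover obtain \<pi>l where "\<pi>l \<in> staircases d1 d2" and lo:
      "(x1, x2, z1, z2, stair_value \<tau>1 \<tau>2 \<pi>l z1 z2, \<delta>1, \<delta>2) \<in> convex hull vertex_points"
    using stair_point_in_hull[OF \<tau>1 \<tau>2 B1 B2] .
  ultimately show "v \<in> convex hull vertex_points"
    unfolding v using bounds by (intro convex_mu_between[OF convex_convex_hull lo hi]) auto
qed

lemma relaxation_eq_hull: "Q = convex hull vertex_points"
proof
  show "convex hull vertex_points \<subseteq> Q"
    using vertex_point_in_relaxation convex_relaxation
    by (intro hull_minimal) (auto simp: vertex_points_def)
qed (rule relaxation_subset_hull)

lemma binary_ok_if_vertex_of: "vertex_of v Q \<Longrightarrow> binary_ok d1 d2 v"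
  using extreme_point_of_convex_hull[of v vertex_points] vertex_of_imp_extreme_point[of v Q]
  by (auto simp: relaxation_eq_hull vertex_points_def binary_ok_vertex_point)

lemma stair_point_at_vertex:
  assumes \<rho>1: "bij_betw \<rho>1 {0..d1} {0..d1}" and \<rho>2: "bij_betw \<rho>2 {0..d2} {0..d2}"
    and B1: "block_ok d1 p1 \<eta>1 x1 z1 \<delta>1" and B2: "block_ok d2 p2 \<eta>2 x2 z2 \<delta>2"
    and t1: "\<forall>k\<le>d1. Tmap d1 z1 k = of_bool (k = t1)" and t2: "\<forall>k\<le>d2. Tmap d2 z2 k = of_bool (k = t2)"
    and "t1 \<le> d1" "t2 \<le> d2"
  obtains \<pi> where "\<pi> \<in> staircases d1 d2"
    and "(x1, x2, z1, z2, stair_value \<rho>1 \<rho>2 \<pi> z1 z2, \<delta>1, \<delta>2) = vertex_point t1 t2"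
proof -
  obtain \<pi> w s1 s2 where \<pi>: "\<pi> \<in> staircases d1 d2" and w: "\<forall>t\<le>d1 + d2. 0 \<le> w t" "(\<Sum>t\<le>d1 + d2. w t) = 1"
    and eq: "(x1, x2, z1, z2, stair_value \<rho>1 \<rho>2 \<pi> z1 z2, \<delta>1, \<delta>2)
      = (\<Sum>t\<le>d1 + d2. w t *\<^sub>R vertex_point (s1 t) (s2 t))"
    and lam1: "\<forall>k\<le>d1. Tmap d1 z1 k = (\<Sum>t\<le>d1 + d2. w t * of_bool (s1 t = k))"
    and lam2: "\<forall>k\<le>d2. Tmap d2 z2 k = (\<Sum>t\<le>d1 + d2. w t * of_bool (s2 t = k))"
    by (rule stair_point_eq_comb[OF \<rho>1 \<rho>2 B1 B2])
  have c1: "(\<Sum>t\<le>d1 + d2. w t * of_bool (s1 t = t1)) = sum w {..d1 + d2}"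
    using lam1[rule_format, OF \<open>t1 \<le> d1\<close>] t1[rule_format, OF \<open>t1 \<le> d1\<close>] w(2) by simp
  have c2: "(\<Sum>t\<le>d1 + d2. w t * of_bool (s2 t = t2)) = sum w {..d1 + d2}"
    using lam2[rule_format, OF \<open>t2 \<le> d2\<close>] t2[rule_format, OF \<open>t2 \<le> d2\<close>] w(2) by simp
  have "s1 t = t1" "s2 t = t2" if "t \<le> d1 + d2" "w t \<noteq> 0" for t
    using weights_concentrated[OF finite_atMost _ c1, of t] weights_concentrated[OF finite_atMost _ c2, of t]
      w(1) that by simp_all
  then have "(\<Sum>t\<le>d1 + d2. w t *\<^sub>R vertex_point (s1 t) (s2 t)) = (\<Sum>t\<le>d1 + d2. w t *\<^sub>R vertex_point t1 t2)"
    by (intro sum.cong) auto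
  also have "\<dots> = vertex_point t1 t2"
    using w(2) by (simp flip: scaleR_sum_left)
  finally show ?thesis
    using that \<pi> eq by simp
qed

lemma binary_point_on_graph:
  assumes "(x1, x2, z1, z2, \<mu>, \<delta>1, \<delta>2) \<in> Q" "binary_ok d1 d2 (x1, x2, z1, z2, \<mu>, \<delta>1, \<delta>2)"
  obtains t1 t2 where "t1 \<le> d1" "t2 \<le> d2" "x1 = p1 t1" "x2 = p2 t2" "\<mu> = f1 (p1 t1) * f2 (p2 t2)"
proof -
  have B1: "block_ok d1 p1 \<eta>1 x1 z1 \<delta>1" and B2: "block_ok d2 p2 \<eta>2 x2 z2 \<delta>2"
    and bounds: "\<forall>\<pi>\<in>staircases d1 d2.
      \<mu> \<le> stair_value \<sigma>1 \<sigma>2 \<pi> z1 z2 \<and> stair_value \<tau>1 \<tau>2 \<pi> z1 z2 \<le> \<mu>"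
    and bin: "\<forall>k\<in>{1..Kdim d1}. \<delta>1 k \<in> {0, 1}" "\<forall>k\<in>{1..Kdim d2}. \<delta>2 k \<in> {0, 1}"
    using assms by (auto simp: relaxation_def binary_ok_def)
  obtain t1 where t1: "t1 \<le> d1" "\<forall>k\<le>d1. Tmap d1 z1 k = of_bool (k = t1)"
    using block_ok_binary_unit[OF B1 bin(1) codes1] by blast
  obtain t2 where t2: "t2 \<le> d2" "\<forall>k\<le>d2. Tmap d2 z2 k = of_bool (k = t2)"
    using block_ok_binary_unit[OF B2 bin(2) codes2] by blast
  obtain \<pi>h where \<pi>h: "\<pi>h \<in> staircases d1 d2" and hi:
    "(x1, x2, z1, z2, stair_value \<sigma>1 \<sigma>2 \<pi>h z1 z2, \<delta>1, \<delta>2) = vertex_point t1 t2"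
    using stair_point_at_vertex[OF \<sigma>1 \<sigma>2 B1 B2 t1(2) t2(2) t1(1) t2(1)] .
  obtain \<pi>l where \<pi>l: "\<pi>l \<in> staircases d1 d2" and lo:
    "(x1, x2, z1, z2, stair_value \<tau>1 \<tau>2 \<pi>l z1 z2, \<delta>1, \<delta>2) = vertex_point t1 t2"
    using stair_point_at_vertex[OF \<tau>1 \<tau>2 B1 B2 t1(2) t2(2) t1(1) t2(1)] .
  have "\<mu> \<le> stair_value \<sigma>1 \<sigma>2 \<pi>h z1 z2"
    "stair_value \<tau>1 \<tau>2 \<pi>l z1 z2 \<le> \<mu>"
    using bounds \<pi>h \<pi>l by blast+
  moreover have "stair_value \<sigma>1 \<sigma>2 \<pi>h z1 z2 = f1 (p1 t1) * f2 (p2 t2)"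
    "stair_value \<tau>1 \<tau>2 \<pi>l z1 z2 = f1 (p1 t1) * f2 (p2 t2)"
    using hi lo unfolding vertex_point_def prod.inject by blast+
  ultimately have "\<mu> = f1 (p1 t1) * f2 (p2 t2)"
    by linarith
  moreover have "x1 = p1 t1" "x2 = p2 t2"
    using hi unfolding vertex_point_def prod.inject by blast+
  ultimately show ?thesis
    using that t1(1) t2(1) by blast
qed

lemma projection_binary_points:
  "proj_xmu ` {w \<in> Q. binary_ok d1 d2 w}
    = {(x1, x2, \<mu>). x1 \<in> p1 ` {0..d1} \<and> x2 \<in> p2 ` {0..d2} \<and> \<mu> = f1 x1 * f2 x2}"
proof (intro equalityI subsetI)
  fix y assume "y \<in> proj_xmu ` {w \<in> Q. binary_ok d1 d2 w}"
  then obtain x1 x2 z1 z2 \<mu> \<delta>1 \<delta>2 where y: "y = (x1, x2, \<mu>)"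
    and w: "(x1, x2, z1, z2, \<mu>, \<delta>1, \<delta>2) \<in> Q" "binary_ok d1 d2 (x1, x2, z1, z2, \<mu>, \<delta>1, \<delta>2)"
    by (force simp: proj_xmu_def)
  obtain t1 t2 where "t1 \<le> d1" "t2 \<le> d2" "x1 = p1 t1" "x2 = p2 t2" "\<mu> = f1 (p1 t1) * f2 (p2 t2)"
    by (rule binary_point_on_graph[OF w])
  then show "y \<in> {(x1, x2, \<mu>). x1 \<in> p1 ` {0..d1} \<and> x2 \<in> p2 ` {0..d2} \<and> \<mu> = f1 x1 * f2 x2}"
    by (simp add: y)
next
  fix y assume "y \<in> {(x1, x2, \<mu>). x1 \<in> p1 ` {0..d1} \<and> x2 \<in> p2 ` {0..d2} \<and> \<mu> = f1 x1 * f2 x2}"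
  then obtain t1 t2 where "t1 \<le> d1" "t2 \<le> d2" "y = proj_xmu (vertex_point t1 t2)"
    by (auto simp: proj_xmu_def vertex_point_def)
  then show "y \<in> proj_xmu ` {w \<in> Q. binary_ok d1 d2 w}"
    using vertex_point_in_relaxation binary_ok_vertex_point by blast
qed

theorem ideal_formulation:
  "ideal_MIP_formulation Q (binary_ok d1 d2) proj_xmu
     {(x1, x2, \<mu>). x1 \<in> p1 ` {0..d1} \<and> x2 \<in> p2 ` {0..d2} \<and> \<mu> = f1 x1 * f2 x2}"
  unfolding ideal_MIP_formulation_def using projection_binary_points binary_ok_if_vertex_of by blast

end

theorem corollary1:
  fixes d1 d2 :: nat and p1 p2 :: "nat \<Rightarrow> real" and f1 f2 :: "real \<Rightarrow> real"
    and \<sigma>1 \<sigma>2 \<tau>1 \<tau>2 :: "nat \<Rightarrow> nat" and \<eta>1 \<eta>2 :: "nat \<Rightarrow> nat \<Rightarrow> bool"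
  assumes "d1 \<ge> 1" and "d2 \<ge> 1"
    and "\<forall>j<d1. p1 j < p1 (Suc j)" and "\<forall>j<d2. p2 j < p2 (Suc j)"
    and "bij_betw \<sigma>1 {0..d1} {0..d1}" and "bij_betw \<sigma>2 {0..d2} {0..d2}"
    and "\<forall>j<d1. f1 (p1 (\<sigma>1 j)) \<le> f1 (p1 (\<sigma>1 (Suc j)))"
    and "\<forall>j<d2. f2 (p2 (\<sigma>2 j)) \<le> f2 (p2 (\<sigma>2 (Suc j)))"
    and "bij_betw \<tau>1 {0..d1} {0..d1}" and "bij_betw \<tau>2 {0..d2} {0..d2}"
    and "\<forall>j<d1. f1 (p1 (\<tau>1 j)) \<le> f1 (p1 (\<tau>1 (Suc j)))"
    and "\<forall>j<d2. f2 (p2 (\<tau>2 j)) \<ge> f2 (p2 (\<tau>2 (Suc j)))"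
    and "\<forall>t\<in>{0..d1}. \<forall>t'\<in>{0..d1}. t \<noteq> t' \<longrightarrow> (\<exists>k\<in>{1..Kdim d1}. \<eta>1 t k \<noteq> \<eta>1 t' k)"
    and "\<forall>t\<in>{0..d2}. \<forall>t'\<in>{0..d2}. t \<noteq> t' \<longrightarrow> (\<exists>k\<in>{1..Kdim d2}. \<eta>2 t k \<noteq> \<eta>2 t' k)"
  shows "ideal_MIP_formulation
           (relaxation d1 d2 p1 p2 f1 f2 \<sigma>1 \<sigma>2 \<tau>1 \<tau>2 \<eta>1 \<eta>2)
           (binary_ok d1 d2) proj_xmu
           {(x1, x2, \<mu>). x1 \<in> p1 ` {0..d1} \<and> x2 \<in> p2 ` {0..d2} \<and> \<mu> = f1 x1 * f2 x2}"
proof -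
  interpret product_formulation d1 d2 p1 p2 f1 f2 \<sigma>1 \<sigma>2 \<tau>1 \<tau>2 \<eta>1 \<eta>2
    using assms(5-14) by unfold_locales
  show ?thesis
    by (rule ideal_formulation)
qed

end
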